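(* Let $\lambda_1,\lambda_2\in P^+$. Then $a^{\lambda_1+\lambda_2}_{\lambda_1,\lambda_2}=1$, and $a^{\tau}_{\lambda_1,\lambda_2}=0$ for every $\tau\in P^+$ with $\tau\not\le\lambda_1+\lambda_2$.
   Context: Let $\mathfrak{sl}_n=\mathfrak n^+\oplus\mathfrak h\oplus\mathfrak n^-$ with simple roots $\alpha_1,\dots,\alpha_{n-1}$, $R^+$ the positive roots, $P^+$ the dominant integral weights, $V(\tau)$ the simple module of highest weight $\tau$; for $\alpha\in R^+$ fix an $\mathfrak{sl}_2$-triple $e_\alpha,f_\alpha,h_\alpha$ with $f_\alpha\in\mathfrak g_{-\alpha}$. The partial order is $\tau\le\mu$ iff $\mu-\tau\in\sum_i\mathbb Z_{\ge0}\alpha_i$. The current algebra $\mathfrak{sl}_n\otimes\mathbb C[t]$ has bracket $[x\otimes p,y\otimes q]=[x,y]\otimes pq$. For $\lambda_1,\lambda_2\in P^+$ with $\lambda=\lambda_1+\lambda_2$, $F_{\lambda_1,\lambda_2}$ is the $\mathfrak{sl}_n\otimes\mathbb C[t]$-module generated by $\mathbb 1$ subject to $(\mathfrak n^+\otimes\mathbb C[t]).\mathbb 1=0$, $(\mathfrak h\otimes t\mathbb C[t]).\mathbb 1=0$, $(\mathfrak n^-\otimes t^2\mathbb C[t]).\mathbb 1=0$, $(h\otimes1).\mathbb 1=\lambda(h)\mathbb 1$ ($h\in\mathfrak h$), and for all $\alpha\in R^+$: $(f_\alpha\otimes1)^{\lambda(h_\alpha)+1}.\mathbb 1=0$, $(f_\alpha\otimes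 t)^{\min\{\lambda_1(h_\alpha),\lambda_2(h_\alpha)\}+1}.\mathbb 1=0$. It is a finite-dimensional $\mathfrak{sl}_n$-module and $a^\tau_{\lambda_1,\lambda_2}:=\dim\operatorname{Hom}_{\mathfrak{sl}_n}(F_{\lambda_1,\lambda_2},V(\tau))$. *)

theory Defs
  imports "Jordan_Normal_Form.Matrix"
begin

text \<open>sl_n realised as traceless complex n x n matrices (indices 0..n-1).
  Simple roots alpha_i (i < n-1): h maps to h(i,i) - h(i+1,i+1).
  Positive roots: eps_i - eps_j for i < j < n, with e = E_ij, f = E_ji, h = E_ii - E_jj.
  Dominant integral weights: lam :: nat => nat, lam i = lam(h_{alpha_i}) for i < n-1
  (coordinates w.r.t. fundamental weights; entries with i >= n-1 are irrelevant).\<close>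

definition mtrace :: "complex mat \<Rightarrow> complex" where
  "mtrace x = (\<Sum>i<dim_row x. x $$ (i,i))"

definition sl :: "nat \<Rightarrow> complex mat set" where
  "sl n = {x \<in> carrier_mat n n. mtrace x = 0}"

definition npos :: "nat \<Rightarrow> complex mat set" where
  "npos n = {x \<in> carrier_mat n n. \<forall>i<n. \<forall>j<n. j \<le> i \<longrightarrow> x $$ (i,j) = 0}"

definition nneg :: "nat \<Rightarrow> complex mat set" where
  "nneg n = {x \<in> carrier_mat n n. \<forall>i<n. \<forall>j<n. i \<le> j \<longrightarrow> x $$ (i,j) = 0}"

definition cartan :: "nat \<Rightarrow> complex mat set" where
  "cartan n = {x \<in> sl n. \<forall>i<n. \<forall>j<n. i \<noteq> j \<longrightarrow> x $$ (i,j) = 0}"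

definition Emat :: "nat \<Rightarrow> nat \<Rightarrow> nat \<Rightarrow> complex mat" where
  "Emat n i j = mat n n (\<lambda>(a,b). if a = i \<and> b = j then 1 else 0)"

definition f_root :: "nat \<Rightarrow> nat \<Rightarrow> nat \<Rightarrow> complex mat" where
  "f_root n i j = Emat n j i"

definition h_root :: "nat \<Rightarrow> nat \<Rightarrow> nat \<Rightarrow> complex mat" where
  "h_root n i j = Emat n i i - Emat n j j"

text \<open>Evaluation of the weight sum_i lam_i omega_i on h in the Cartan subalgebra,
  where omega_i(h) = h(0,0) + ... + h(i,i).\<close>
definition weight_eval :: "nat \<Rightarrow> (nat \<Rightarrow> nat) \<Rightarrow> complex mat \<Rightarrow> complex" where
  "weight_eval n lam h = (\<Sum>i<n-1. of_nat (lam i) * (\<Sum>k\<le>i. h $$ (k,k)))"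

definition weight_le :: "nat \<Rightarrow> (nat \<Rightarrow> nat) \<Rightarrow> (nat \<Rightarrow> nat) \<Rightarrow> bool" where
  "weight_le n tau mu = (\<exists>c :: nat \<Rightarrow> nat. \<forall>h\<in>cartan n.
      weight_eval n mu h - weight_eval n tau h
        = (\<Sum>i<n-1. of_nat (c i) * (h $$ (i,i) - h $$ (i+1,i+1))))"

text \<open>A d-dimensional representation of the current algebra sl_n (x) C[t]:
  rho x k is the action of x (x) t^k (these span the current algebra).\<close>
definition current_rep :: "nat \<Rightarrow> nat \<Rightarrow> (complex mat \<Rightarrow> nat \<Rightarrow> complex mat) \<Rightarrow> bool" where
  "current_rep n d rho =
    ((\<forall>x\<in>sl n. \<forall>k. rho x k \<in> carrier_mat d d) \<and>
     (\<forall>x\<in>sl n. \<forall>y\<in>sl n. \<forall>a b k. rho (a \<cdot>\<^sub>m x + b \<cdot>\<^sub>m y) k = a \<cdot>\<^sub>m rho x k + b \<cdot>\<^sub>m rho y k) \<and>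
     (\<forall>x\<in>sl n. \<forall>y\<in>sl n. \<forall>k l.
        rho x k * rho y l - rho y l * rho x k = rho (x * y - y * x) (k + l)))"

definition sl_rep :: "nat \<Rightarrow> nat \<Rightarrow> (complex mat \<Rightarrow> complex mat) \<Rightarrow> bool" where
  "sl_rep n d sigma =
    ((\<forall>x\<in>sl n. sigma x \<in> carrier_mat d d) \<and>
     (\<forall>x\<in>sl n. \<forall>y\<in>sl n. \<forall>a b. sigma (a \<cdot>\<^sub>m x + b \<cdot>\<^sub>m y) = a \<cdot>\<^sub>m sigma x + b \<cdot>\<^sub>m sigma y) \<and>
     (\<forall>x\<in>sl n. \<forall>y\<in>sl n. sigma x * sigma y - sigma y * sigma x = sigma (x * y - y * x)))"

definition lin_subspace :: "nat \<Rightarrow> complex vec set \<Rightarrow> bool" where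
  "lin_subspace d W = (W \<subseteq> carrier_vec d \<and> 0\<^sub>v d \<in> W \<and>
     (\<forall>u\<in>W. \<forall>w\<in>W. u + w \<in> W) \<and> (\<forall>c. \<forall>u\<in>W. c \<cdot>\<^sub>v u \<in> W))"

text \<open>Defining relations of F_{lam1,lam2} on the vector v (the image of the generator 1).\<close>
definition F_rels :: "nat \<Rightarrow> (nat \<Rightarrow> nat) \<Rightarrow> (nat \<Rightarrow> nat) \<Rightarrow> nat \<Rightarrow>
    (complex mat \<Rightarrow> nat \<Rightarrow> complex mat) \<Rightarrow> complex vec \<Rightarrow> bool" where
  "F_rels n lam1 lam2 d rho v =
    (v \<in> carrier_vec d \<and>
     (\<forall>x\<in>npos n. \<forall>k. rho x k *\<^sub>v v = 0\<^sub>v d) \<and>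
     (\<forall>h\<in>cartan n. \<forall>k\<ge>1. rho h k *\<^sub>v v = 0\<^sub>v d) \<and>
     (\<forall>x\<in>nneg n \<inter> sl n. \<forall>k\<ge>2. rho x k *\<^sub>v v = 0\<^sub>v d) \<and>
     (\<forall>h\<in>cartan n. rho h 0 *\<^sub>v v = weight_eval n (\<lambda>i. lam1 i + lam2 i) h \<cdot>\<^sub>v v) \<and>
     (\<forall>i j m. i < j \<and> j < n \<and> of_nat m = weight_eval n (\<lambda>i. lam1 i + lam2 i) (h_root n i j) \<longrightarrow>
        (rho (f_root n i j) 0 ^\<^sub>m (m + 1)) *\<^sub>v v = 0\<^sub>v d) \<and>
     (\<forall>i j m1 m2. i < j \<and> j < n \<and> of_nat m1 = weight_eval n lam1 (h_root n i j)
          \<and> of_nat m2 = weight_eval n lam2 (h_root n i j) \<longrightarrow>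
        (rho (f_root n i j) 1 ^\<^sub>m (min m1 m2 + 1)) *\<^sub>v v = 0\<^sub>v d))"

text \<open>(d, rho, v) is (a matrix realisation of) F_{lam1,lam2}: a finite-dimensional
  current-algebra module generated by v, v satisfies the relations, and it has the
  universal property among finite-dimensional modules with a vector satisfying the
  relations (this characterises F up to isomorphism since F is finite-dimensional).\<close>
definition is_F :: "nat \<Rightarrow> (nat \<Rightarrow> nat) \<Rightarrow> (nat \<Rightarrow> nat) \<Rightarrow> nat \<Rightarrow>
    (complex mat \<Rightarrow> nat \<Rightarrow> complex mat) \<Rightarrow> complex vec \<Rightarrow> bool" where
  "is_F n lam1 lam2 d rho v =
    (current_rep n d rho \<and> F_rels n lam1 lam2 d rho v \<and>
     (\<forall>W. lin_subspace d W \<and> v \<in> W \<and> (\<forall>x\<in>sl n. \<forall>k. \<forall>u\<in>W. rho x k *\<^sub>v u \<in> W)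
          \<longrightarrow> W = carrier_vec d) \<and>
     (\<forall>d' rho' w. current_rep n d' rho' \<and> F_rels n lam1 lam2 d' rho' w \<longrightarrow>
        (\<exists>\<phi>\<in>carrier_mat d' d. (\<forall>x\<in>sl n. \<forall>k. \<phi> * rho x k = rho' x k * \<phi>) \<and> \<phi> *\<^sub>v v = w)))"

definition is_simple_hw :: "nat \<Rightarrow> (nat \<Rightarrow> nat) \<Rightarrow> nat \<Rightarrow> (complex mat \<Rightarrow> complex mat) \<Rightarrow> bool" where
  "is_simple_hw n tau m sigma =
    (sl_rep n m sigma \<and> m > 0 \<and>
     (\<forall>W. lin_subspace m W \<and> (\<forall>x\<in>sl n. \<forall>u\<in>W. sigma x *\<^sub>v u \<in> W)
          \<longrightarrow> W = {0\<^sub>v m} \<or> W = carrier_vec m) \<and>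
     (\<exists>u\<in>carrier_vec m. u \<noteq> 0\<^sub>v m \<and> (\<forall>x\<in>npos n. sigma x *\<^sub>v u = 0\<^sub>v m) \<and>
        (\<forall>h\<in>cartan n. sigma h *\<^sub>v u = weight_eval n tau h \<cdot>\<^sub>v u)))"

definition hom_sl :: "nat \<Rightarrow> nat \<Rightarrow> (complex mat \<Rightarrow> nat \<Rightarrow> complex mat) \<Rightarrow> nat \<Rightarrow>
    (complex mat \<Rightarrow> complex mat) \<Rightarrow> complex mat set" where
  "hom_sl n d rho m sigma = {\<phi> \<in> carrier_mat m d. \<forall>x\<in>sl n. \<phi> * rho x 0 = sigma x * \<phi>}"

definition mat_lincomb :: "nat \<Rightarrow> nat \<Rightarrow> complex list \<Rightarrow> complex mat list \<Rightarrow> complex mat" where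
  "mat_lincomb r c cs B = foldr (\<lambda>(a, b) acc. a \<cdot>\<^sub>m b + acc) (zip cs B) (0\<^sub>m r c)"

definition mat_dim :: "nat \<Rightarrow> nat \<Rightarrow> complex mat set \<Rightarrow> nat" where
  "mat_dim r c S = (LEAST k. \<exists>B. length B = k \<and> set B \<subseteq> S \<and>
      (\<forall>s\<in>S. \<exists>cs. length cs = length B \<and> s = mat_lincomb r c cs B))"

end

theory Submission
  imports Defs "Jordan_Normal_Form.Char_Poly"
begin

text \<open>The module \<open>F\<close> is spanned by the monomials \<open>(f\<^sub>\<beta>\<^sub>1 \<otimes> t\<^sup>k\<^sup>1) \<cdots> (f\<^sub>\<beta>\<^sub>r \<otimes> t\<^sup>k\<^sup>r) \<one>\<close>,
  a weight vector of weight \<open>\<lambda> - (\<beta>\<^sub>1 + \<dots> + \<beta>\<^sub>r)\<close>; the only one of weight \<open>\<lambda>\<close> is \<open>\<one>\<close> itself.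
  A nonzero \<open>sl\<^sub>n\<close>-map \<open>\<psi> : F \<rightarrow> V(\<tau>)\<close> is onto, so a highest weight vector of \<open>V(\<tau>)\<close> is a
  combination of images of monomials, and since weight spaces are independent only monomials
  of weight \<open>\<tau>\<close> contribute; hence \<open>\<tau> \<le> \<lambda>\<close>. For \<open>\<tau> = \<lambda>\<close> the highest weight vector is a
  multiple of \<open>\<psi> \<one>\<close>, so \<open>\<psi>\<close> is determined up to a scalar by \<open>\<psi> \<one>\<close>. Conversely, \<open>V(\<lambda>)\<close> with
  \<open>t\<close> acting by zero satisfies the defining relations of \<open>F\<close> (the relation for \<open>f\<^sub>\<alpha> \<otimes> 1\<close> by
  \<open>sl\<^sub>2\<close>-theory), so the universal property provides a nonzero map.\<close>

section \<open>Matrix units and \<open>sl\<^sub>n\<close>\<close>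

lemma Emat_carrier [simp]: "Emat n i j \<in> carrier_mat n n"
  by (simp add: Emat_def)

lemma dim_Emat [simp]: "dim_row (Emat n i j) = n" "dim_col (Emat n i j) = n"
  by (simp_all add: Emat_def)

lemma Emat_index [simp]:
  "a < n \<Longrightarrow> b < n \<Longrightarrow> Emat n i j $$ (a,b) = (if a = i \<and> b = j then 1 else 0)"
  by (simp add: Emat_def)

lemma mult_Emat_index:
  assumes "A \<in> carrier_mat n n" "a < n" "b < n" "i < n"
  shows "(A * Emat n i j) $$ (a,b) = (if b = j then A $$ (a,i) else 0)"
proof -
  have "(A * Emat n i j) $$ (a,b) = (\<Sum>k\<in>{0..<n}. A $$ (a,k) * (if k = i \<and> b = j then 1 else 0))"
    using assms by (simp add: scalar_prod_def)
  also have "\<dots> = (\<Sum>k\<in>{0..<n}. if k = i then (if b = j then A $$ (a,i) else 0) else 0)"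
    by (rule sum.cong) auto
  finally show ?thesis using assms by simp
qed

lemma Emat_mult_index:
  assumes "A \<in> carrier_mat n n" "a < n" "b < n" "j < n"
  shows "(Emat n i j * A) $$ (a,b) = (if a = i then A $$ (j,b) else 0)"
proof -
  have "(Emat n i j * A) $$ (a,b) = (\<Sum>k\<in>{0..<n}. (if a = i \<and> k = j then 1 else 0) * A $$ (k,b))"
    using assms by (simp add: scalar_prod_def)
  also have "\<dots> = (\<Sum>k\<in>{0..<n}. if k = j then (if a = i then A $$ (j,b) else 0) else 0)"
    by (rule sum.cong) auto
  finally show ?thesis using assms by simp
qed

lemma cartan_Emat_commutator:
  assumes h: "h \<in> cartan n" and "i < n" "j < n"
  shows "h * Emat n i j - Emat n i j * h = (h $$ (i,i) - h $$ (j,j)) \<cdot>\<^sub>m Emat n i j"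
proof -
  have hc: "h \<in> carrier_mat n n" and diag: "\<And>a b. a < n \<Longrightarrow> b < n \<Longrightarrow> a \<noteq> b \<Longrightarrow> h $$ (a,b) = 0"
    using h unfolding cartan_def sl_def by auto
  show ?thesis
    by (rule eq_matI)
      (use assms hc diag in \<open>auto simp del: index_mult_mat(1) simp: mult_Emat_index Emat_mult_index\<close>)
qed

lemma Emat_commutator:
  assumes "i < n" "j < n" "i \<noteq> j"
  shows "Emat n i j * Emat n j i - Emat n j i * Emat n i j = h_root n i j"
  by (rule eq_matI) (use assms in \<open>auto simp del: index_mult_mat(1) simp: Emat_mult_index h_root_def\<close>)

lemma mtrace_commutator:
  assumes "x \<in> carrier_mat n n" "y \<in> carrier_mat n n"
  shows "mtrace (x * y - y * x) = 0"
proof -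
  have "mtrace (x * y) = (\<Sum>i<n. \<Sum>k<n. x $$ (i,k) * y $$ (k,i))"
    using assms by (simp add: mtrace_def scalar_prod_def lessThan_atLeast0)
  also have "\<dots> = (\<Sum>k<n. \<Sum>i<n. y $$ (k,i) * x $$ (i,k))"
    by (subst sum.swap) (simp add: mult.commute)
  also have "\<dots> = mtrace (y * x)"
    using assms by (simp add: mtrace_def scalar_prod_def lessThan_atLeast0)
  finally show ?thesis
    using assms by (simp add: mtrace_def sum_subtractf)
qed

lemma sl_commutator: "x \<in> sl n \<Longrightarrow> y \<in> sl n \<Longrightarrow> x * y - y * x \<in> sl n"
  unfolding sl_def using mtrace_commutator by auto

lemma Emat_in_sl: "i \<noteq> j \<Longrightarrow> Emat n i j \<in> sl n"
  unfolding sl_def mtrace_def by (auto intro!: sum.neutral)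

lemma cartan_in_sl: "h \<in> cartan n \<Longrightarrow> h \<in> sl n"
  unfolding cartan_def by auto

lemma Emat_in_npos: "i < j \<Longrightarrow> Emat n i j \<in> npos n"
  unfolding npos_def by auto

lemma h_root_in_cartan:
  assumes "i < n" "j < n" "i \<noteq> j"
  shows "h_root n i j \<in> cartan n"
proof -
  have "mtrace (h_root n i j) = (\<Sum>k<n. (if k = i then 1 else 0) - (if k = j then 1 else 0))"
    unfolding mtrace_def h_root_def by (intro sum.cong) auto
  also have "\<dots> = 0"
    using assms by (simp add: sum_subtractf)
  finally show ?thesis
    unfolding cartan_def sl_def h_root_def by auto
qed

lemma h_root_diag:
  assumes "i < n" "j < n" "i \<noteq> j"
  shows "h_root n i j $$ (i,i) = 1" "h_root n i j $$ (j,j) = -1"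
  using assms by (auto simp: h_root_def)

lemma sl_induct [consumes 1, case_names cartan unit lincomb]:
  assumes x: "x \<in> sl n"
    and cartan: "\<And>h. h \<in> cartan n \<Longrightarrow> P h"
    and unit: "\<And>a b. a < n \<Longrightarrow> b < n \<Longrightarrow> a \<noteq> b \<Longrightarrow> P (Emat n a b)"
    and lincomb: "\<And>x y a b. x \<in> sl n \<Longrightarrow> y \<in> sl n \<Longrightarrow> P x \<Longrightarrow> P y \<Longrightarrow> P (a \<cdot>\<^sub>m x + b \<cdot>\<^sub>m y)"
  shows "P x"
proof -
  define offdiag where
    "offdiag x = {(a,b). a < n \<and> b < n \<and> a \<noteq> b \<and> x $$ (a,b) \<noteq> 0}" for x :: "complex mat"
  have finite_offdiag: "finite (offdiag y)" for y
    by (rule finite_subset[of _ "{..<n} \<times> {..<n}"]) (auto simp: offdiag_def)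
  show ?thesis using x
  proof (induction "card (offdiag x)" arbitrary: x rule: less_induct)
    case less
    have xc: "x \<in> carrier_mat n n" and tr: "mtrace x = 0"
      using less.prems unfolding sl_def by auto
    show ?case
    proof (cases "offdiag x = {}")
      case True
      then have "x \<in> cartan n"
        using less.prems unfolding cartan_def offdiag_def by auto
      then show ?thesis by (rule cartan)
    next
      case False
      then obtain a b where ab: "a < n" "b < n" "a \<noteq> b" "x $$ (a,b) \<noteq> 0"
        unfolding offdiag_def by auto
      define x' where "x' = x + (- x $$ (a,b)) \<cdot>\<^sub>m Emat n a b"
      have x'c: "x' \<in> carrier_mat n n"
        unfolding x'_def using xc by auto
      have x'_index: "x' $$ (i,j) = (if i = a \<and> j = b then 0 else x $$ (i,j))" if "i < n" "j < n" for i j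
        unfolding x'_def using xc that by auto
      have "mtrace x' = mtrace x"
        unfolding mtrace_def using x'c xc x'_index ab by (auto intro!: sum.cong)
      then have x'_sl: "x' \<in> sl n"
        using x'c tr unfolding sl_def by auto
      have "offdiag x' \<subseteq> offdiag x" "(a,b) \<in> offdiag x - offdiag x'"
        using x'_index ab unfolding offdiag_def by (auto split: if_splits)
      then have "offdiag x' \<subset> offdiag x" by blast
      then have "P x'"
        using less.hyps x'_sl psubset_card_mono[OF finite_offdiag] by blast
      then have "P (x $$ (a,b) \<cdot>\<^sub>m Emat n a b + 1 \<cdot>\<^sub>m x')"
        by (rule lincomb[OF Emat_in_sl[OF ab(3)] x'_sl unit[OF ab(1-3)]])
      moreover have "x = x $$ (a,b) \<cdot>\<^sub>m Emat n a b + 1 \<cdot>\<^sub>m x'"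
        by (rule eq_matI) (use xc x'c x'_index in auto)
      ultimately show ?thesis by simp
    qed
  qed
qed

lemma mult_mat_vec_zero [simp]: "A \<in> carrier_mat nr nc \<Longrightarrow> A *\<^sub>v 0\<^sub>v nc = 0\<^sub>v nr"
  by (intro eq_vecI) auto

lemma smult_mat_mult_vec:
  "A \<in> carrier_mat nr nc \<Longrightarrow> w \<in> carrier_vec nc \<Longrightarrow> (a \<cdot>\<^sub>m A) *\<^sub>v w = a \<cdot>\<^sub>v (A *\<^sub>v w)"
  by (intro eq_vecI) (auto simp: scalar_prod_def sum_distrib_left mult.assoc)

lemma lincomb_mult_vec:
  assumes "X \<in> carrier_mat d d" "Y \<in> carrier_mat d d" "w \<in> carrier_vec d"
  shows "(a \<cdot>\<^sub>m X + b \<cdot>\<^sub>m Y) *\<^sub>v w = a \<cdot>\<^sub>v (X *\<^sub>v w) + b \<cdot>\<^sub>v (Y *\<^sub>v w)"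
  using assms by (subst add_mult_distrib_mat_vec[of _ d d]) (auto simp: smult_mat_mult_vec)

lemma commutator_mult_vec:
  fixes X Y :: "complex mat"
  assumes "X \<in> carrier_mat d d" "Y \<in> carrier_mat d d" "w \<in> carrier_vec d"
  shows "X *\<^sub>v (Y *\<^sub>v w) = Y *\<^sub>v (X *\<^sub>v w) + (X * Y - Y * X) *\<^sub>v w"
proof -
  have "(X * Y - Y * X) *\<^sub>v w = X *\<^sub>v (Y *\<^sub>v w) - Y *\<^sub>v (X *\<^sub>v w)"
    using assms by (simp add: minus_mult_distrib_mat_vec[of _ d d])
  then show ?thesis
    using assms by (intro eq_vecI) auto
qed

lemma current_rep_carrier: "current_rep n d rho \<Longrightarrow> x \<in> sl n \<Longrightarrow> rho x k \<in> carrier_mat d d"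
  unfolding current_rep_def by auto

lemma current_rep_commutator:
  "current_rep n d rho \<Longrightarrow> x \<in> sl n \<Longrightarrow> y \<in> sl n \<Longrightarrow>
    rho x k * rho y l - rho y l * rho x k = rho (x * y - y * x) (k + l)"
  unfolding current_rep_def by blast

lemma current_rep_smult:
  assumes r: "current_rep n d rho" and x: "x \<in> sl n"
  shows "rho (a \<cdot>\<^sub>m x) k = a \<cdot>\<^sub>m rho x k"
proof -
  have "rho (a \<cdot>\<^sub>m x + 0 \<cdot>\<^sub>m x) k = a \<cdot>\<^sub>m rho x k + 0 \<cdot>\<^sub>m rho x k"
    using r x unfolding current_rep_def by blast
  moreover have "a \<cdot>\<^sub>m x + 0 \<cdot>\<^sub>m x = a \<cdot>\<^sub>m x"
    using x unfolding sl_def by (intro eq_matI) auto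
  ultimately show ?thesis
    using current_rep_carrier[OF r x, of k] by (auto intro!: eq_matI)
qed

lemma sl_rep_carrier: "sl_rep n m sigma \<Longrightarrow> x \<in> sl n \<Longrightarrow> sigma x \<in> carrier_mat m m"
  unfolding sl_rep_def by auto

lemma sl_rep_commutator:
  "sl_rep n m sigma \<Longrightarrow> x \<in> sl n \<Longrightarrow> y \<in> sl n \<Longrightarrow>
    sigma x * sigma y - sigma y * sigma x = sigma (x * y - y * x)"
  unfolding sl_rep_def by blast

lemma sl_rep_smult:
  assumes r: "sl_rep n m sigma" and x: "x \<in> sl n"
  shows "sigma (a \<cdot>\<^sub>m x) = a \<cdot>\<^sub>m sigma x"
proof -
  have "sigma (a \<cdot>\<^sub>m x + 0 \<cdot>\<^sub>m x) = a \<cdot>\<^sub>m sigma x + 0 \<cdot>\<^sub>m sigma x"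
    using r x unfolding sl_rep_def by blast
  moreover have "a \<cdot>\<^sub>m x + 0 \<cdot>\<^sub>m x = a \<cdot>\<^sub>m x"
    using x unfolding sl_def by (intro eq_matI) auto
  ultimately show ?thesis
    using sl_rep_carrier[OF r x] by (auto intro!: eq_matI)
qed

section \<open>Spans and weight vectors\<close>

inductive_set vspan :: "nat \<Rightarrow> complex vec set \<Rightarrow> complex vec set" for d S where
  zero: "0\<^sub>v d \<in> vspan d S"
| gen: "s \<in> S \<Longrightarrow> s \<in> vspan d S"
| lincomb: "u \<in> vspan d S \<Longrightarrow> w \<in> vspan d S \<Longrightarrow> a \<cdot>\<^sub>v u + b \<cdot>\<^sub>v w \<in> vspan d S"

lemma vspan_carrier:
  assumes "S \<subseteq> carrier_vec d" "u \<in> vspan d S"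
  shows "u \<in> carrier_vec d"
  using assms(2) by induction (use assms(1) in auto)

lemma vspan_add:
  assumes "S \<subseteq> carrier_vec d" "u \<in> vspan d S" "w \<in> vspan d S"
  shows "u + w \<in> vspan d S"
proof -
  have "1 \<cdot>\<^sub>v u + 1 \<cdot>\<^sub>v w \<in> vspan d S"
    using assms by (intro vspan.lincomb)
  then show ?thesis
    using vspan_carrier[OF assms(1)] assms by auto
qed

lemma vspan_smult:
  assumes "S \<subseteq> carrier_vec d" "u \<in> vspan d S"
  shows "a \<cdot>\<^sub>v u \<in> vspan d S"
proof -
  have "a \<cdot>\<^sub>v u + 0 \<cdot>\<^sub>v u \<in> vspan d S"
    using assms by (intro vspan.lincomb)
  moreover have "a \<cdot>\<^sub>v u + 0 \<cdot>\<^sub>v u = a \<cdot>\<^sub>v u"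
    using vspan_carrier[OF assms] by (intro eq_vecI) auto
  ultimately show ?thesis by simp
qed

lemma lin_subspace_vspan:
  assumes "S \<subseteq> carrier_vec d"
  shows "lin_subspace d (vspan d S)"
  unfolding lin_subspace_def
  using vspan_carrier[OF assms] vspan.zero vspan_add[OF assms] vspan_smult[OF assms] by blast

lemma mult_mat_vec_vspan:
  assumes A: "A \<in> carrier_mat d' d" and S: "S \<subseteq> carrier_vec d"
    and gen: "\<And>s. s \<in> S \<Longrightarrow> A *\<^sub>v s \<in> vspan d' T"
    and u: "u \<in> vspan d S"
  shows "A *\<^sub>v u \<in> vspan d' T"
  using u
proof (induction rule: vspan.induct)
  case zero
  have "A *\<^sub>v 0\<^sub>v d = 0\<^sub>v d'" using A by auto
  then show ?case using vspan.zero by metis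
next
  case (gen s)
  then show ?case by (rule assms(3))
next
  case (lincomb u w a b)
  have "u \<in> carrier_vec d" "w \<in> carrier_vec d"
    using vspan_carrier[OF S] lincomb by auto
  then have "A *\<^sub>v (a \<cdot>\<^sub>v u + b \<cdot>\<^sub>v w) = a \<cdot>\<^sub>v (A *\<^sub>v u) + b \<cdot>\<^sub>v (A *\<^sub>v w)"
    using A by (simp add: mult_add_distrib_mat_vec[of _ d' d] mult_mat_vec)
  then show ?case using lincomb vspan.lincomb by metis
qed

lemma vspan_subset_vspan:
  assumes "\<And>s. s \<in> S \<Longrightarrow> s \<in> vspan d T" "u \<in> vspan d S"
  shows "u \<in> vspan d T"
  using assms(2)
proof (induction rule: vspan.induct)
  case (lincomb u w a b)
  then show ?case by (intro vspan.lincomb)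
qed (use assms(1) vspan.zero in auto)

lemma vspan_subset_multiples:
  assumes g: "g \<in> carrier_vec d" and S: "S \<subseteq> range (\<lambda>a. a \<cdot>\<^sub>v g)" and u: "u \<in> vspan d S"
  shows "\<exists>a. u = a \<cdot>\<^sub>v g"
  using u
proof (induction rule: vspan.induct)
  case zero
  have "0\<^sub>v d = 0 \<cdot>\<^sub>v g" using g by auto
  then show ?case by blast
next
  case (gen s)
  then show ?case using S by blast
next
  case (lincomb u w a b)
  then obtain a' b' where "u = a' \<cdot>\<^sub>v g" "w = b' \<cdot>\<^sub>v g" by blast
  then have "a \<cdot>\<^sub>v u + b \<cdot>\<^sub>v w = (a * a' + b * b') \<cdot>\<^sub>v g"
    using g by (intro eq_vecI) (auto simp: algebra_simps)
  then show ?case by blast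
qed

definition vsum :: "nat \<Rightarrow> complex vec list \<Rightarrow> complex vec" where
  "vsum D xs = foldr (+) xs (0\<^sub>v D)"

lemma vsum_simps [simp]: "vsum D [] = 0\<^sub>v D" "vsum D (x # xs) = x + vsum D xs"
  by (simp_all add: vsum_def)

lemma vsum_carrier: "set xs \<subseteq> carrier_vec D \<Longrightarrow> vsum D xs \<in> carrier_vec D"
  by (induction xs) auto

lemma mult_mat_vec_vsum:
  "A \<in> carrier_mat D' D \<Longrightarrow> set xs \<subseteq> carrier_vec D \<Longrightarrow> A *\<^sub>v vsum D xs = vsum D' (map (\<lambda>x. A *\<^sub>v x) xs)"
proof (induction xs)
  case (Cons x xs)
  then have "vsum D xs \<in> carrier_vec D" using vsum_carrier by auto
  then show ?case using Cons by (simp add: mult_add_distrib_mat_vec[of _ D' D])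
qed auto

lemma vsum_append:
  "set xs \<subseteq> carrier_vec D \<Longrightarrow> set ys \<subseteq> carrier_vec D \<Longrightarrow> vsum D (xs @ ys) = vsum D xs + vsum D ys"
proof (induction xs)
  case Nil
  then show ?case using vsum_carrier[of ys D] by auto
next
  case (Cons x xs)
  then have "vsum D xs \<in> carrier_vec D" "vsum D ys \<in> carrier_vec D" "x \<in> carrier_vec D"
    using vsum_carrier by auto
  then show ?case using Cons by simp
qed

lemma smult_vsum: "set xs \<subseteq> carrier_vec D \<Longrightarrow> a \<cdot>\<^sub>v vsum D xs = vsum D (map (\<lambda>x. a \<cdot>\<^sub>v x) xs)"
proof (induction xs)
  case (Cons x xs)
  then have "vsum D xs \<in> carrier_vec D" "x \<in> carrier_vec D" using vsum_carrier by auto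
  then show ?case using Cons by (simp add: smult_add_distrib_vec)
qed auto

lemma vspan_image_vsum:
  assumes fM: "f ` M \<subseteq> carrier_vec D" and u: "u \<in> vspan D (f ` M)"
  shows "\<exists>ts. set (map snd ts) \<subseteq> M \<and> u = vsum D (map (\<lambda>(a,p). a \<cdot>\<^sub>v f p) ts)"
  using u
proof (induction rule: vspan.induct)
  case zero
  show ?case by (rule exI[of _ "[]"]) simp
next
  case (gen s)
  then obtain p where p: "p \<in> M" "s = f p" by auto
  then have "s = vsum D (map (\<lambda>(a,p). a \<cdot>\<^sub>v f p) [(1,p)])"
    using fM by auto
  then show ?case using p by (intro exI[of _ "[(1,p)]"]) auto
next
  case (lincomb u w a b)
  then obtain ts1 ts2 where
    ts1: "set (map snd ts1) \<subseteq> M" "u = vsum D (map (\<lambda>(a,p). a \<cdot>\<^sub>v f p) ts1)" and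
    ts2: "set (map snd ts2) \<subseteq> M" "w = vsum D (map (\<lambda>(a,p). a \<cdot>\<^sub>v f p) ts2)"
    by blast
  define ts where "ts = map (\<lambda>(c,p). (a * c, p)) ts1 @ map (\<lambda>(c,p). (b * c, p)) ts2"
  have c1: "set (map (\<lambda>(a,p). a \<cdot>\<^sub>v f p) ts1) \<subseteq> carrier_vec D"
    using ts1 fM by force
  have c2: "set (map (\<lambda>(a,p). a \<cdot>\<^sub>v f p) ts2) \<subseteq> carrier_vec D"
    using ts2 fM by force
  have "a \<cdot>\<^sub>v u + b \<cdot>\<^sub>v w = vsum D (map (\<lambda>(a,p). a \<cdot>\<^sub>v f p) ts)"
    unfolding ts1(2) ts2(2) smult_vsum[OF c1] smult_vsum[OF c2] ts_def map_append
    using c1 c2 by (subst vsum_append) (auto simp: smult_smult_assoc case_prod_beta o_def)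
  then show ?case
    using ts1 ts2 by (intro exI[of _ ts]) (auto simp: ts_def)
qed

definition weight_vector ::
    "nat \<Rightarrow> (complex mat \<Rightarrow> complex mat) \<Rightarrow> complex vec \<Rightarrow> (complex mat \<Rightarrow> complex) \<Rightarrow> bool" where
  "weight_vector n H z \<mu> \<longleftrightarrow> (\<forall>h\<in>cartan n. H h *\<^sub>v z = \<mu> h \<cdot>\<^sub>v z)"

lemma weight_vector_smult:
  assumes H: "\<And>h. h \<in> cartan n \<Longrightarrow> H h \<in> carrier_mat D D"
    and y: "y \<in> carrier_vec D" "weight_vector n H y \<nu>"
  shows "weight_vector n H (c \<cdot>\<^sub>v y) \<nu>"
  unfolding weight_vector_def
proof
  fix h assume h: "h \<in> cartan n"
  have "H h *\<^sub>v (c \<cdot>\<^sub>v y) = c \<cdot>\<^sub>v (\<nu> h \<cdot>\<^sub>v y)"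
    using mult_mat_vec[OF H[OF h] y(1)] y(2) h unfolding weight_vector_def by auto
  then show "H h *\<^sub>v (c \<cdot>\<^sub>v y) = \<nu> h \<cdot>\<^sub>v (c \<cdot>\<^sub>v y)"
    by (simp add: smult_smult_assoc mult.commute)
qed

lemma weight_vector_shift:
  assumes H: "H h \<in> carrier_mat D D" and h: "h \<in> cartan n"
    and y: "y \<in> carrier_vec D" "weight_vector n H y \<nu>"
  shows "(H h - c \<cdot>\<^sub>m 1\<^sub>m D) *\<^sub>v y = (\<nu> h - c) \<cdot>\<^sub>v y"
proof -
  have "(H h - c \<cdot>\<^sub>m 1\<^sub>m D) *\<^sub>v y = H h *\<^sub>v y - c \<cdot>\<^sub>v y"
    using H y by (simp add: minus_mult_distrib_mat_vec[of _ D D] smult_mat_mult_vec[of _ D D])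
  also have "\<dots> = (\<nu> h - c) \<cdot>\<^sub>v y"
    using y h unfolding weight_vector_def by (intro eq_vecI) (auto simp: algebra_simps)
  finally show ?thesis .
qed

lemma weight_vector_add_cancel:
  assumes H: "\<And>h. h \<in> cartan n \<Longrightarrow> H h \<in> carrier_mat D D"
    and y: "y \<in> carrier_vec D" "weight_vector n H y \<mu>" and r: "r \<in> carrier_vec D"
    and yr: "weight_vector n H (y + r) \<mu>"
  shows "weight_vector n H r \<mu>"
  unfolding weight_vector_def
proof
  fix h assume h: "h \<in> cartan n"
  have "H h *\<^sub>v (y + r) = H h *\<^sub>v y + H h *\<^sub>v r"
    using H[OF h] y r by (simp add: mult_add_distrib_mat_vec[of _ D D])
  then have sum: "\<mu> h \<cdot>\<^sub>v (y + r) = \<mu> h \<cdot>\<^sub>v y + H h *\<^sub>v r"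
    using yr y(2) h unfolding weight_vector_def by auto
  show "H h *\<^sub>v r = \<mu> h \<cdot>\<^sub>v r"
  proof (rule eq_vecI)
    fix i assume "i < dim_vec (\<mu> h \<cdot>\<^sub>v r)"
    then have i: "i < D" using r by simp
    have "(\<mu> h \<cdot>\<^sub>v (y + r)) $ i = (\<mu> h \<cdot>\<^sub>v y + H h *\<^sub>v r) $ i"
      using sum by simp
    then show "(H h *\<^sub>v r) $ i = (\<mu> h \<cdot>\<^sub>v r) $ i"
      using i y r H[OF h] by (simp add: algebra_simps)
  qed (use H[OF h] r in simp)
qed

lemma shift_mult_vec_vsum_weight_vectors:
  assumes H: "H h \<in> carrier_mat D D" and h: "h \<in> cartan n"
    and ys: "\<forall>(y,\<nu>)\<in>set ys. y \<in> carrier_vec D \<and> weight_vector n H y \<nu>"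
  shows "(H h - c \<cdot>\<^sub>m 1\<^sub>m D) *\<^sub>v vsum D (map fst ys) = vsum D (map (\<lambda>(y,\<nu>). (\<nu> h - c) \<cdot>\<^sub>v y) ys)"
proof -
  have "map (\<lambda>x. (H h - c \<cdot>\<^sub>m 1\<^sub>m D) *\<^sub>v x) (map fst ys) = map (\<lambda>(y,\<nu>). (\<nu> h - c) \<cdot>\<^sub>v y) ys"
    unfolding map_map
  proof (rule map_cong[OF refl])
    fix p assume "p \<in> set ys"
    then obtain y \<nu> where "p = (y,\<nu>)" "y \<in> carrier_vec D" "weight_vector n H y \<nu>"
      using ys by (cases p) auto
    then show "((\<lambda>x. (H h - c \<cdot>\<^sub>m 1\<^sub>m D) *\<^sub>v x) \<circ> fst) p = (\<lambda>(y,\<nu>). (\<nu> h - c) \<cdot>\<^sub>v y) p"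
      using weight_vector_shift[where H=H, OF H h] by auto
  qed
  moreover have "set (map fst ys) \<subseteq> carrier_vec D"
    using ys by auto
  moreover have "H h - c \<cdot>\<^sub>m 1\<^sub>m D \<in> carrier_mat D D"
    using H by auto
  ultimately show ?thesis
    using mult_mat_vec_vsum by metis
qed

text \<open>A summand of weight \<open>\<nu> \<noteq> \<mu>\<close> is removed by applying \<open>H h - \<nu> h\<close> for an \<open>h\<close> separating
  \<open>\<nu>\<close> from \<open>\<mu>\<close>; this rescales the other summands and keeps their weights.\<close>
lemma vsum_weight_vectors_in_vspan:
  assumes H: "\<And>h. h \<in> cartan n \<Longrightarrow> H h \<in> carrier_mat D D"
  shows "\<forall>(y,\<nu>)\<in>set ys. y \<in> carrier_vec D \<and> weight_vector n H y \<nu> \<Longrightarrow>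
    weight_vector n H (vsum D (map fst ys)) \<mu> \<Longrightarrow>
    vsum D (map fst ys) \<in> vspan D {y. \<exists>\<nu>. (y,\<nu>) \<in> set ys \<and> (\<forall>h\<in>cartan n. \<nu> h = \<mu> h)}"
proof (induction ys rule: length_induct)
  case (1 ys)
  show ?case
  proof (cases ys)
    case Nil
    then show ?thesis by (simp add: vspan.zero)
  next
    case (Cons p ys0)
    obtain y1 \<nu>1 where p: "p = (y1, \<nu>1)" by (cases p)
    define S where "S = {y. \<exists>\<nu>. (y,\<nu>) \<in> set ys \<and> (\<forall>h\<in>cartan n. \<nu> h = \<mu> h)}"
    define r where "r = vsum D (map fst ys0)"
    have ys0: "\<forall>(y,\<nu>)\<in>set ys0. y \<in> carrier_vec D \<and> weight_vector n H y \<nu>"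
      using 1(2) Cons by auto
    have y1: "y1 \<in> carrier_vec D" "weight_vector n H y1 \<nu>1"
      using 1(2) Cons p by auto
    have r: "r \<in> carrier_vec D"
      unfolding r_def using ys0 by (intro vsum_carrier) auto
    have z: "vsum D (map fst ys) = y1 + r" "y1 + r \<in> carrier_vec D"
      unfolding r_def Cons p using y1 r[unfolded r_def] by auto
    have SD: "S \<subseteq> carrier_vec D"
      using 1(2) unfolding S_def by auto
    have zw: "weight_vector n H (y1 + r) \<mu>"
      using 1(3) z by simp
    show ?thesis
    proof (cases "\<forall>h\<in>cartan n. \<nu>1 h = \<mu> h")
      case True
      then have "weight_vector n H y1 \<mu>"
        using y1(2) unfolding weight_vector_def by simp
      then have "weight_vector n H r \<mu>"
        using weight_vector_add_cancel[of n H D, OF H y1(1) _ r zw] by blast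
      moreover have "length ys0 < length ys"
        using Cons by simp
      ultimately have "r \<in> vspan D {y. \<exists>\<nu>. (y,\<nu>) \<in> set ys0 \<and> (\<forall>h\<in>cartan n. \<nu> h = \<mu> h)}"
        using 1(1) ys0 unfolding r_def by blast
      then have "r \<in> vspan D S"
        by (rule vspan_subset_vspan[rotated]) (auto simp: S_def Cons intro: vspan.gen)
      moreover have "y1 \<in> vspan D S"
        using True by (auto simp: S_def Cons p intro!: vspan.gen)
      ultimately show ?thesis
        unfolding z(1) S_def[symmetric] using vspan_add[OF SD] by blast
    next
      case False
      then obtain h1 where h1: "h1 \<in> cartan n" "\<nu>1 h1 \<noteq> \<mu> h1" by auto
      define A where "A = H h1 - \<nu>1 h1 \<cdot>\<^sub>m 1\<^sub>m D"
      define ys' where "ys' = map (\<lambda>(y,\<nu>). ((\<nu> h1 - \<nu>1 h1) \<cdot>\<^sub>v y, \<nu>)) ys0"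
      have A: "A \<in> carrier_mat D D"
        unfolding A_def using H[OF h1(1)] by auto
      have ys': "\<forall>(y,\<nu>)\<in>set ys'. y \<in> carrier_vec D \<and> weight_vector n H y \<nu>"
        using ys0 weight_vector_smult[of n H D, OF H] unfolding ys'_def by auto
      have Ay1: "A *\<^sub>v y1 = 0\<^sub>v D"
        unfolding A_def using weight_vector_shift[where H=H, OF H[OF h1(1)] h1(1) y1] y1 by auto
      have Ar: "A *\<^sub>v r = vsum D (map fst ys')"
        unfolding A_def r_def shift_mult_vec_vsum_weight_vectors[OF H[OF h1(1)] h1(1) ys0] ys'_def
        by (simp add: case_prod_unfold o_def)
      have "set (map fst ys') \<subseteq> carrier_vec D"
        using ys' by auto
      then have vsum_ys': "vsum D (map fst ys') \<in> carrier_vec D"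
        by (rule vsum_carrier)
      have "(\<mu> h1 - \<nu>1 h1) \<cdot>\<^sub>v (y1 + r) = A *\<^sub>v (y1 + r)"
        unfolding A_def using weight_vector_shift[where H=H, OF H[OF h1(1)] h1(1) z(2) zw] by simp
      also have "\<dots> = A *\<^sub>v y1 + A *\<^sub>v r"
        using A y1 r by (simp add: mult_add_distrib_mat_vec[of _ D D])
      also have "\<dots> = vsum D (map fst ys')"
        unfolding Ay1 Ar using vsum_ys' by simp
      finally have sz: "(\<mu> h1 - \<nu>1 h1) \<cdot>\<^sub>v (y1 + r) = vsum D (map fst ys')" .
      have "length ys' < length ys"
        unfolding ys'_def Cons by simp
      moreover have "weight_vector n H (vsum D (map fst ys')) \<mu>"
        using weight_vector_smult[of n H D, OF H z(2) zw] sz by metis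
      ultimately have "vsum D (map fst ys') \<in> vspan D {y. \<exists>\<nu>. (y,\<nu>) \<in> set ys' \<and> (\<forall>h\<in>cartan n. \<nu> h = \<mu> h)}"
        using 1(1) ys' by blast
      then have "(\<mu> h1 - \<nu>1 h1) \<cdot>\<^sub>v (y1 + r) \<in> vspan D S"
        unfolding sz
      proof (rule vspan_subset_vspan[rotated])
        fix s assume "s \<in> {y. \<exists>\<nu>. (y,\<nu>) \<in> set ys' \<and> (\<forall>h\<in>cartan n. \<nu> h = \<mu> h)}"
        then obtain y \<nu> where y: "(y,\<nu>) \<in> set ys0" "\<forall>h\<in>cartan n. \<nu> h = \<mu> h"
          and s: "s = (\<nu> h1 - \<nu>1 h1) \<cdot>\<^sub>v y"
          unfolding ys'_def by auto
        then have "y \<in> vspan D S"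
          by (auto simp: S_def Cons intro!: vspan.gen)
        then show "s \<in> vspan D S"
          unfolding s by (rule vspan_smult[OF SD])
      qed
      then have "(1 / (\<mu> h1 - \<nu>1 h1)) \<cdot>\<^sub>v ((\<mu> h1 - \<nu>1 h1) \<cdot>\<^sub>v (y1 + r)) \<in> vspan D S"
        by (rule vspan_smult[OF SD])
      then show ?thesis
        using h1(2) z by (simp add: smult_smult_assoc S_def)
    qed
  qed
qed

lemma vspan_weight_vectors_in_vspan:
  assumes H: "\<And>h. h \<in> cartan n \<Longrightarrow> H h \<in> carrier_mat D D"
    and P: "\<forall>(s,\<nu>)\<in>P. s \<in> carrier_vec D \<and> weight_vector n H s \<nu>"
    and z: "z \<in> vspan D (fst ` P)" "weight_vector n H z \<mu>"
  shows "z \<in> vspan D {s. \<exists>\<nu>. (s,\<nu>) \<in> P \<and> (\<forall>h\<in>cartan n. \<nu> h = \<mu> h)}"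
proof -
  have PD: "fst ` P \<subseteq> carrier_vec D" using P by auto
  obtain ts where ts: "set (map snd ts) \<subseteq> P" "z = vsum D (map (\<lambda>(a,p). a \<cdot>\<^sub>v fst p) ts)"
    using vspan_image_vsum[OF PD z(1)] by blast
  define ys where "ys = map (\<lambda>(a,p). (a \<cdot>\<^sub>v fst p, snd p)) ts"
  have "z = vsum D (map fst ys)"
    unfolding ts(2) ys_def by (simp add: case_prod_unfold o_def)
  moreover have "\<forall>(y,\<nu>)\<in>set ys. y \<in> carrier_vec D \<and> weight_vector n H y \<nu>"
  proof (clarsimp simp: ys_def)
    fix a s \<nu> assume "(a, s, \<nu>) \<in> set ts"
    then have "(s, \<nu>) \<in> P" using ts(1) by force
    then show "s \<in> carrier_vec D \<and> weight_vector n H (a \<cdot>\<^sub>v s) \<nu>"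
      using P weight_vector_smult[of n H D, OF H] by blast
  qed
  ultimately have "z \<in> vspan D {y. \<exists>\<nu>. (y,\<nu>) \<in> set ys \<and> (\<forall>h\<in>cartan n. \<nu> h = \<mu> h)}"
    using vsum_weight_vectors_in_vspan[OF H] z(2) by auto
  then show ?thesis
  proof (rule vspan_subset_vspan[rotated])
    fix y assume "y \<in> {y. \<exists>\<nu>. (y,\<nu>) \<in> set ys \<and> (\<forall>h\<in>cartan n. \<nu> h = \<mu> h)}"
    then obtain a s \<nu> where "(a, s, \<nu>) \<in> set ts" "\<forall>h\<in>cartan n. \<nu> h = \<mu> h" "y = a \<cdot>\<^sub>v s"
      unfolding ys_def by auto
    moreover from this have "(s, \<nu>) \<in> P" using ts(1) by force
    ultimately show "y \<in> vspan D {s. \<exists>\<nu>. (s,\<nu>) \<in> P \<and> (\<forall>h\<in>cartan n. \<nu> h = \<mu> h)}"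
      using P by (blast intro: vspan_smult vspan.gen)
  qed
qed

section \<open>\<open>sl\<^sub>2\<close>-strings and evaluation modules\<close>

lemma finite_eigenvalues:
  fixes A :: "complex mat"
  assumes A: "A \<in> carrier_mat m m"
  shows "finite {c. eigenvalue A c}"
proof -
  have "char_poly A \<noteq> 0"
    using degree_monic_char_poly[OF A] by auto
  then have "finite {c. poly (char_poly A) c = 0}"
    by (rule poly_roots_finite)
  then show ?thesis
    using eigenvalue_root_char_poly[OF A] by simp
qed

lemma pow_mat_mult_vec_funpow:
  assumes F: "F \<in> carrier_mat m m" and w: "w \<in> carrier_vec m"
  shows "(F ^\<^sub>m k) *\<^sub>v w = ((\<lambda>x. F *\<^sub>v x) ^^ k) w"
  using w
proof (induction k arbitrary: w)
  case (Suc k)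
  have "(F ^\<^sub>m Suc k) *\<^sub>v w = (F ^\<^sub>m k) *\<^sub>v (F *\<^sub>v w)"
    using F Suc.prems by (simp add: assoc_mult_mat_vec[of _ m m])
  also have "\<dots> = ((\<lambda>x. F *\<^sub>v x) ^^ k) (F *\<^sub>v w)"
    using F Suc by simp
  finally show ?case
    by (simp only: funpow_Suc_right o_apply)
qed (use F in simp)

lemma sl2_string:
  fixes E F H :: "complex mat" and u :: "complex vec"
  assumes E: "E \<in> carrier_mat m m" and F: "F \<in> carrier_mat m m" and H: "H \<in> carrier_mat m m"
    and EF: "E * F - F * E = H" and HF: "H * F - F * H = (-2) \<cdot>\<^sub>m F"
    and u: "u \<in> carrier_vec m" and Eu: "E *\<^sub>v u = 0\<^sub>v m" and Hu: "H *\<^sub>v u = of_nat M \<cdot>\<^sub>v u"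
  shows "H *\<^sub>v ((\<lambda>x. F *\<^sub>v x) ^^ k) u = (of_nat M - 2 * of_nat k) \<cdot>\<^sub>v ((\<lambda>x. F *\<^sub>v x) ^^ k) u"
    and "E *\<^sub>v ((\<lambda>x. F *\<^sub>v x) ^^ Suc k) u
      = (of_nat (Suc k) * (of_nat M - of_nat k)) \<cdot>\<^sub>v ((\<lambda>x. F *\<^sub>v x) ^^ k) u"
proof -
  define U where "U k = ((\<lambda>x. F *\<^sub>v x) ^^ k) u" for k
  have U0: "U 0 = u" and US: "U (Suc k) = F *\<^sub>v U k" for k
    by (simp_all add: U_def)
  have Uc: "U k \<in> carrier_vec m" for k
    using F u by (induction k) (auto simp: US U0)
  have HU: "H *\<^sub>v U k = (of_nat M - 2 * of_nat k) \<cdot>\<^sub>v U k" for k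
  proof (induction k)
    case (Suc k)
    have "H *\<^sub>v U (Suc k) = F *\<^sub>v (H *\<^sub>v U k) + ((-2) \<cdot>\<^sub>m F) *\<^sub>v U k"
      unfolding US HF[symmetric] by (rule commutator_mult_vec[OF H F Uc])
    also have "\<dots> = (of_nat M - 2 * of_nat k) \<cdot>\<^sub>v U (Suc k) + (-2) \<cdot>\<^sub>v U (Suc k)"
      unfolding Suc US using F Uc by (simp add: mult_mat_vec smult_mat_mult_vec)
    also have "\<dots> = (of_nat M - 2 * of_nat (Suc k)) \<cdot>\<^sub>v U (Suc k)"
      using Uc[of "Suc k"] by (intro eq_vecI) (auto simp: algebra_simps)
    finally show ?case .
  qed (simp add: U0 Hu)
  have EU: "E *\<^sub>v U (Suc k) = (of_nat (Suc k) * (of_nat M - of_nat k)) \<cdot>\<^sub>v U k" for k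
  proof (induction k)
    case 0
    have "E *\<^sub>v U (Suc 0) = F *\<^sub>v (E *\<^sub>v u) + H *\<^sub>v u"
      unfolding US U0 EF[symmetric] by (rule commutator_mult_vec[OF E F u(1)])
    then show ?case
      using Eu Hu F u by (simp add: U0)
  next
    case (Suc k)
    have "E *\<^sub>v U (Suc (Suc k)) = F *\<^sub>v (E *\<^sub>v U (Suc k)) + H *\<^sub>v U (Suc k)"
      unfolding US[of "Suc k"] EF[symmetric] by (rule commutator_mult_vec[OF E F Uc])
    also have "\<dots> = (of_nat (Suc k) * (of_nat M - of_nat k)) \<cdot>\<^sub>v U (Suc k)
        + (of_nat M - 2 * of_nat (Suc k)) \<cdot>\<^sub>v U (Suc k)"
      unfolding Suc HU using F Uc by (simp add: mult_mat_vec US)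
    also have "\<dots> = (of_nat (Suc (Suc k)) * (of_nat M - of_nat (Suc k))) \<cdot>\<^sub>v U (Suc k)"
      using Uc[of "Suc k"] by (intro eq_vecI) (auto simp: algebra_simps)
    finally show ?case .
  qed
  show "H *\<^sub>v ((\<lambda>x. F *\<^sub>v x) ^^ k) u = (of_nat M - 2 * of_nat k) \<cdot>\<^sub>v ((\<lambda>x. F *\<^sub>v x) ^^ k) u"
    using HU unfolding U_def .
  show "E *\<^sub>v ((\<lambda>x. F *\<^sub>v x) ^^ Suc k) u
      = (of_nat (Suc k) * (of_nat M - of_nat k)) \<cdot>\<^sub>v ((\<lambda>x. F *\<^sub>v x) ^^ k) u"
    using EU unfolding U_def .
qed

text \<open>For an \<open>sl\<^sub>2\<close>-triple \<open>(E, H, F)\<close> and a vector \<open>u\<close> killed by \<open>E\<close> with \<open>H\<close>-eigenvalue \<open>M\<close>,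
  the vectors \<open>F\<^sup>k u\<close> have \<open>H\<close>-eigenvalues \<open>M - 2k\<close>, so finite dimensionality forces one of
  them to vanish; applying \<open>E\<close> to the first vanishing one \<open>F\<^sup>k\<^sup>+\<^sup>1 u\<close> gives
  \<open>(k+1)(M-k) F\<^sup>k u = 0\<close>, whence \<open>k = M\<close>.\<close>
lemma sl2_lowering_nilpotent:
  fixes E F H :: "complex mat" and u :: "complex vec"
  assumes E: "E \<in> carrier_mat m m" and F: "F \<in> carrier_mat m m" and H: "H \<in> carrier_mat m m"
    and EF: "E * F - F * E = H" and HF: "H * F - F * H = (-2) \<cdot>\<^sub>m F"
    and u: "u \<in> carrier_vec m" "u \<noteq> 0\<^sub>v m" and Eu: "E *\<^sub>v u = 0\<^sub>v m" and Hu: "H *\<^sub>v u = of_nat M \<cdot>\<^sub>v u"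
  shows "(F ^\<^sub>m (M + 1)) *\<^sub>v u = 0\<^sub>v m"
proof -
  define U where "U k = ((\<lambda>x. F *\<^sub>v x) ^^ k) u" for k
  have U0: "U 0 = u"
    by (simp add: U_def)
  have Uc: "U k \<in> carrier_vec m" for k
    using F u by (induction k) (auto simp: U_def)
  have HU: "H *\<^sub>v U k = (of_nat M - 2 * of_nat k) \<cdot>\<^sub>v U k" for k
    unfolding U_def by (rule sl2_string(1)[OF E F H EF HF u(1) Eu Hu])
  have EU: "E *\<^sub>v U (Suc k) = (of_nat (Suc k) * (of_nat M - of_nat k)) \<cdot>\<^sub>v U k" for k
    unfolding U_def by (rule sl2_string(2)[OF E F H EF HF u(1) Eu Hu])
  have "\<exists>k. U k = 0\<^sub>v m"
  proof (rule ccontr)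
    assume "\<nexists>k. U k = 0\<^sub>v m"
    then have "eigenvalue H (of_nat M - 2 * of_nat k)" for k
      unfolding eigenvalue_def eigenvector_def using Uc[of k] HU[of k] H by auto
    then have "range (\<lambda>k. of_nat M - 2 * of_nat k :: complex) \<subseteq> {c. eigenvalue H c}"
      by auto
    moreover have "inj (\<lambda>k. of_nat M - 2 * of_nat k :: complex)"
      by (auto simp: inj_def)
    ultimately show False
      using finite_eigenvalues[OF H] finite_subset finite_imageD infinite_UNIV_nat by metis
  qed
  define K where "K = (LEAST k. U k = 0\<^sub>v m)"
  have UK: "U K = 0\<^sub>v m"
    unfolding K_def using LeastI_ex[OF \<open>\<exists>k. U k = 0\<^sub>v m\<close>] .
  then obtain k where Kk: "K = Suc k"
    using u(2) U0 by (cases K) auto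
  have Uk: "U k \<noteq> 0\<^sub>v m"
    using not_less_Least[of k "\<lambda>k. U k = 0\<^sub>v m"] Kk K_def by auto
  obtain i where i: "i < m" "U k $ i \<noteq> 0"
    using Uk Uc[of k] by (auto simp: vec_eq_iff)
  have "(of_nat (Suc k) * (of_nat M - of_nat k)) \<cdot>\<^sub>v U k = 0\<^sub>v m"
    using EU[of k] UK Kk E by auto
  then have "(of_nat (Suc k) * (of_nat M - of_nat k)) * U k $ i = 0"
    using i Uc[of k] by (metis index_smult_vec(1) index_zero_vec(1) carrier_vecD)
  then have "(of_nat (Suc k) * (of_nat M - of_nat k) :: complex) = 0"
    using i(2) by simp
  then have "M = k"
    by (simp del: of_nat_Suc)
  then have "U (M + 1) = 0\<^sub>v m"
    using UK Kk by simp
  then show ?thesis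
    unfolding U_def pow_mat_mult_vec_funpow[OF F u(1)] .
qed

definition sl_hw_vector ::
    "nat \<Rightarrow> nat \<Rightarrow> (complex mat \<Rightarrow> complex mat) \<Rightarrow> (nat \<Rightarrow> nat) \<Rightarrow> complex vec \<Rightarrow> bool" where
  "sl_hw_vector n m sigma tau u \<longleftrightarrow> u \<in> carrier_vec m \<and> u \<noteq> 0\<^sub>v m \<and>
     (\<forall>x\<in>npos n. sigma x *\<^sub>v u = 0\<^sub>v m) \<and> (\<forall>h\<in>cartan n. sigma h *\<^sub>v u = weight_eval n tau h \<cdot>\<^sub>v u)"

lemma is_simple_hwD:
  assumes "is_simple_hw n tau m sigma"
  shows "sl_rep n m sigma"
    and "\<And>W. lin_subspace m W \<Longrightarrow> \<forall>x\<in>sl n. \<forall>u\<in>W. sigma x *\<^sub>v u \<in> W \<Longrightarrow> W = {0\<^sub>v m} \<or> W = carrier_vec m"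
    and "\<exists>u. sl_hw_vector n m sigma tau u"
  using assms unfolding is_simple_hw_def sl_hw_vector_def by blast+

lemma sl_hw_vector_lowering_nilpotent:
  assumes sr: "sl_rep n m sigma" and u: "sl_hw_vector n m sigma tau u"
    and ij: "i < j" "j < n" and M: "of_nat M = weight_eval n tau (h_root n i j)"
  shows "(sigma (f_root n i j) ^\<^sub>m (M + 1)) *\<^sub>v u = 0\<^sub>v m"
proof -
  have hc: "h_root n i j \<in> cartan n"
    using h_root_in_cartan ij by auto
  have sl: "Emat n i j \<in> sl n" "Emat n j i \<in> sl n" "h_root n i j \<in> sl n"
    using Emat_in_sl cartan_in_sl[OF hc] ij by auto
  have "sigma (h_root n i j) * sigma (Emat n j i) - sigma (Emat n j i) * sigma (h_root n i j)
      = sigma (h_root n i j * Emat n j i - Emat n j i * h_root n i j)"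
    using sl_rep_commutator[OF sr sl(3,2)] .
  also have "h_root n i j * Emat n j i - Emat n j i * h_root n i j = (-2) \<cdot>\<^sub>m Emat n j i"
    using cartan_Emat_commutator[OF hc, of j i] h_root_diag[of i n j] ij by simp
  also have "sigma \<dots> = (-2) \<cdot>\<^sub>m sigma (Emat n j i)"
    using sl_rep_smult[OF sr sl(2)] .
  finally have HF: "sigma (h_root n i j) * sigma (Emat n j i) - sigma (Emat n j i) * sigma (h_root n i j)
      = (-2) \<cdot>\<^sub>m sigma (Emat n j i)" .
  have EF: "sigma (Emat n i j) * sigma (Emat n j i) - sigma (Emat n j i) * sigma (Emat n i j) = sigma (h_root n i j)"
    using sl_rep_commutator[OF sr sl(1,2)] Emat_commutator[of i n j] ij by auto
  have "(sigma (Emat n j i) ^\<^sub>m (M + 1)) *\<^sub>v u = 0\<^sub>v m"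
    by (rule sl2_lowering_nilpotent[OF sl_rep_carrier[OF sr sl(1)] sl_rep_carrier[OF sr sl(2)]
          sl_rep_carrier[OF sr sl(3)] EF HF])
      (use u hc M Emat_in_npos[OF ij(1)] in \<open>auto simp: sl_hw_vector_def\<close>)
  then show ?thesis
    by (simp add: f_root_def)
qed

definition eval_rep :: "(complex mat \<Rightarrow> complex mat) \<Rightarrow> nat \<Rightarrow> complex mat \<Rightarrow> nat \<Rightarrow> complex mat" where
  "eval_rep sigma m x k = (if k = 0 then sigma x else 0\<^sub>m m m)"

lemma current_rep_eval_rep:
  assumes sr: "sl_rep n m sigma"
  shows "current_rep n m (eval_rep sigma m)"
  unfolding current_rep_def
proof (intro conjI ballI allI)
  fix x k assume "x \<in> sl n"
  then show "eval_rep sigma m x k \<in> carrier_mat m m"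
    using sl_rep_carrier[OF sr] by (auto simp: eval_rep_def)
next
  fix x y a b k assume "x \<in> sl n" "y \<in> sl n"
  then show "eval_rep sigma m (a \<cdot>\<^sub>m x + b \<cdot>\<^sub>m y) k = a \<cdot>\<^sub>m eval_rep sigma m x k + b \<cdot>\<^sub>m eval_rep sigma m y k"
    using sr unfolding sl_rep_def by (auto simp: eval_rep_def intro!: eq_matI)
next
  fix x y k l assume x: "x \<in> sl n" and y: "y \<in> sl n"
  show "eval_rep sigma m x k * eval_rep sigma m y l - eval_rep sigma m y l * eval_rep sigma m x k
      = eval_rep sigma m (x * y - y * x) (k + l)"
    using sl_rep_commutator[OF sr x y] sl_rep_carrier[OF sr x] sl_rep_carrier[OF sr y]
    by (cases "k = 0 \<and> l = 0") (auto simp: eval_rep_def intro!: eq_matI)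
qed

lemma zero_pow_mat_Suc: "(0\<^sub>m m m :: complex mat) ^\<^sub>m Suc k = 0\<^sub>m m m"
  by (induction k) auto

lemma F_rels_eval_rep:
  assumes sr: "sl_rep n m sigma" and u: "sl_hw_vector n m sigma (\<lambda>i. lam1 i + lam2 i) u"
  shows "F_rels n lam1 lam2 m (eval_rep sigma m) u"
  unfolding F_rels_def
proof (intro conjI ballI allI impI)
  have z: "0\<^sub>m m m *\<^sub>v u = 0\<^sub>v m"
    using u by (auto simp: sl_hw_vector_def)
  show "u \<in> carrier_vec m"
    using u by (simp add: sl_hw_vector_def)
  show "eval_rep sigma m x k *\<^sub>v u = 0\<^sub>v m" if "x \<in> npos n" for x k
    using u z that by (auto simp: eval_rep_def sl_hw_vector_def)
  show "eval_rep sigma m h k *\<^sub>v u = 0\<^sub>v m" if "1 \<le> k" for h k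
    using z that by (auto simp: eval_rep_def)
  show "eval_rep sigma m x k *\<^sub>v u = 0\<^sub>v m" if "2 \<le> k" for x k
    using z that by (auto simp: eval_rep_def)
  show "eval_rep sigma m h 0 *\<^sub>v u = weight_eval n (\<lambda>i. lam1 i + lam2 i) h \<cdot>\<^sub>v u" if "h \<in> cartan n" for h
    using u that by (auto simp: eval_rep_def sl_hw_vector_def)
  show "eval_rep sigma m (f_root n i j) 0 ^\<^sub>m (M + 1) *\<^sub>v u = 0\<^sub>v m"
    if "i < j \<and> j < n \<and> of_nat M = weight_eval n (\<lambda>i. lam1 i + lam2 i) (h_root n i j)" for i j M
    using sl_hw_vector_lowering_nilpotent[OF sr u] that by (simp add: eval_rep_def)
  show "eval_rep sigma m (f_root n i j) 1 ^\<^sub>m (min m1 m2 + 1) *\<^sub>v u = 0\<^sub>v m" for i j m1 m2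
    using z zero_pow_mat_Suc[of m "min m1 m2"] by (simp add: eval_rep_def)
qed

section \<open>Monomials spanning \<open>F\<close>\<close>

definition current_hw_vector ::
    "nat \<Rightarrow> nat \<Rightarrow> (complex mat \<Rightarrow> nat \<Rightarrow> complex mat) \<Rightarrow> (nat \<Rightarrow> nat) \<Rightarrow> complex vec \<Rightarrow> bool" where
  "current_hw_vector n d rho lam v \<longleftrightarrow> v \<in> carrier_vec d \<and>
     (\<forall>x\<in>npos n. \<forall>k. rho x k *\<^sub>v v = 0\<^sub>v d) \<and>
     (\<forall>h\<in>cartan n. \<forall>k\<ge>1. rho h k *\<^sub>v v = 0\<^sub>v d) \<and>
     (\<forall>h\<in>cartan n. rho h 0 *\<^sub>v v = weight_eval n lam h \<cdot>\<^sub>v v)"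

lemma F_rels_current_hw_vector:
  "F_rels n lam1 lam2 d rho v \<Longrightarrow> current_hw_vector n d rho (\<lambda>i. lam1 i + lam2 i) v"
  unfolding F_rels_def current_hw_vector_def by auto

text \<open>\<open>root_comb_eval n c h\<close> is the value at \<open>h\<close> of \<open>\<Sum>\<^sub>l c l \<alpha>\<^sub>l\<close>, and \<open>add_root i j c\<close> adds the
  positive root \<open>\<epsilon>\<^sub>i - \<epsilon>\<^sub>j = \<alpha>\<^sub>i + \<dots> + \<alpha>\<^sub>j\<^sub>-\<^sub>1\<close> to the coefficient vector \<open>c\<close>.\<close>
definition root_comb_eval :: "nat \<Rightarrow> (nat \<Rightarrow> nat) \<Rightarrow> complex mat \<Rightarrow> complex" where
  "root_comb_eval n c h = (\<Sum>l<n-1. of_nat (c l) * (h $$ (l,l) - h $$ (l+1,l+1)))"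

definition add_root :: "nat \<Rightarrow> nat \<Rightarrow> (nat \<Rightarrow> nat) \<Rightarrow> nat \<Rightarrow> nat" where
  "add_root i j c l = c l + (if i \<le> l \<and> l < j then 1 else 0)"

lemma root_comb_eval_add_root:
  assumes "i < j" "j < n"
  shows "root_comb_eval n (add_root i j c) h = root_comb_eval n c h + (h $$ (i,i) - h $$ (j,j))"
proof -
  have "(\<Sum>l<n-1. of_nat (if i \<le> l \<and> l < j then 1 else 0) * (h $$ (l,l) - h $$ (l+1,l+1)))
      = (\<Sum>l\<in>{i..<j}. h $$ (l,l) - h $$ (Suc l, Suc l))"
    using assms by (intro sum.mono_neutral_cong_right) auto
  also have "\<dots> = - (\<Sum>l\<in>{i..<j}. h $$ (Suc l, Suc l) - h $$ (l,l))"
    by (simp add: sum_negf[symmetric])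
  also have "\<dots> = h $$ (i,i) - h $$ (j,j)"
    using assms by (subst sum_Suc_diff') auto
  finally show ?thesis
    by (simp add: root_comb_eval_def add_root_def distrib_right sum.distrib)
qed

text \<open>The monomials \<open>(f\<^sub>\<beta>\<^sub>1 \<otimes> t\<^sup>k\<^sup>1) \<cdots> (f\<^sub>\<beta>\<^sub>r \<otimes> t\<^sup>k\<^sup>r) v\<close> in the lowering operators, each paired with
  the coefficient vector of \<open>\<beta>\<^sub>1 + \<dots> + \<beta>\<^sub>r\<close> in the simple roots.\<close>
inductive_set monomials ::
    "nat \<Rightarrow> (complex mat \<Rightarrow> nat \<Rightarrow> complex mat) \<Rightarrow> complex vec \<Rightarrow> (complex vec \<times> (nat \<Rightarrow> nat)) set"
  for n rho v where
  base: "(v, \<lambda>_. 0) \<in> monomials n rho v"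
| lower: "(w, c) \<in> monomials n rho v \<Longrightarrow> i < j \<Longrightarrow> j < n \<Longrightarrow>
    (rho (Emat n j i) k *\<^sub>v w, add_root i j c) \<in> monomials n rho v"

lemma monomials_carrier:
  assumes r: "current_rep n d rho" and v: "v \<in> carrier_vec d" and m: "(w, c) \<in> monomials n rho v"
  shows "w \<in> carrier_vec d"
  using m
proof induction
  case (lower w c i j k)
  then show ?case
    using current_rep_carrier[OF r Emat_in_sl[of j i n], of k] by auto
qed (use v in auto)

lemma monomial_weight_vector:
  assumes r: "current_rep n d rho" and hw: "current_hw_vector n d rho lam v"
    and m: "(w, c) \<in> monomials n rho v"
  shows "weight_vector n (\<lambda>h. rho h 0) w (\<lambda>h. weight_eval n lam h - root_comb_eval n c h)"
  unfolding weight_vector_def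
proof
  fix h assume h: "h \<in> cartan n"
  have v: "v \<in> carrier_vec d"
    using hw by (simp add: current_hw_vector_def)
  show "rho h 0 *\<^sub>v w = (weight_eval n lam h - root_comb_eval n c h) \<cdot>\<^sub>v w"
    using m
  proof induction
    case base
    then show ?case
      using hw h by (simp add: current_hw_vector_def root_comb_eval_def)
  next
    case (lower w c i j k)
    define E where "E = Emat n j i"
    have E: "E \<in> sl n"
      unfolding E_def using lower by (intro Emat_in_sl) auto
    have H: "h \<in> sl n"
      using h by (rule cartan_in_sl)
    have w: "w \<in> carrier_vec d"
      using monomials_carrier[OF r v lower(1)] .
    have R: "rho E k \<in> carrier_mat d d"
      using current_rep_carrier[OF r E] .
    have "rho h 0 *\<^sub>v (rho E k *\<^sub>v w)
        = rho E k *\<^sub>v (rho h 0 *\<^sub>v w) + rho (h * E - E * h) k *\<^sub>v w"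
      using commutator_mult_vec[OF current_rep_carrier[OF r H] R w]
        current_rep_commutator[OF r H E, of 0 k] by simp
    also have "rho (h * E - E * h) k = (h $$ (j,j) - h $$ (i,i)) \<cdot>\<^sub>m rho E k"
      unfolding E_def using cartan_Emat_commutator[OF h, of j i] current_rep_smult[OF r E[unfolded E_def]] lower
      by auto
    also have "rho E k *\<^sub>v (rho h 0 *\<^sub>v w) + ((h $$ (j,j) - h $$ (i,i)) \<cdot>\<^sub>m rho E k) *\<^sub>v w
        = (weight_eval n lam h - root_comb_eval n (add_root i j c) h) \<cdot>\<^sub>v (rho E k *\<^sub>v w)"
      unfolding lower(4) root_comb_eval_add_root[OF lower(2,3)]
      using R w by (intro eq_vecI) (auto simp: mult_mat_vec smult_mat_mult_vec algebra_simps)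
    finally show ?case
      unfolding E_def .
  qed
qed

lemma mult_vec_hw_vector_in_vspan_monomials:
  assumes r: "current_rep n d rho" and hw: "current_hw_vector n d rho lam v" and x: "x \<in> sl n"
  shows "rho x k *\<^sub>v v \<in> vspan d (fst ` monomials n rho v)"
proof -
  have v: "v \<in> carrier_vec d"
    using hw by (simp add: current_hw_vector_def)
  have MD: "fst ` monomials n rho v \<subseteq> carrier_vec d"
    using monomials_carrier[OF r v] by auto
  show ?thesis
    using x
  proof (induction x rule: sl_induct)
    case (cartan h)
    show ?case
    proof (cases "k = 0")
      case True
      then have "rho h k *\<^sub>v v = weight_eval n lam h \<cdot>\<^sub>v v"
        using hw cartan by (simp add: current_hw_vector_def)
      moreover have "v \<in> vspan d (fst ` monomials n rho v)"
        by (rule vspan.gen) (use monomials.base in force)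
      ultimately show ?thesis
        using vspan_smult[OF MD] by metis
    next
      case False
      then have "rho h k *\<^sub>v v = 0\<^sub>v d"
        using hw cartan by (simp add: current_hw_vector_def)
      then show ?thesis
        using vspan.zero by metis
    qed
  next
    case (unit a b)
    show ?case
    proof (cases "a < b")
      case True
      then have "rho (Emat n a b) k *\<^sub>v v = 0\<^sub>v d"
        using hw Emat_in_npos by (simp add: current_hw_vector_def)
      then show ?thesis
        using vspan.zero by metis
    next
      case False
      then have "(rho (Emat n a b) k *\<^sub>v v, add_root b a (\<lambda>_. 0)) \<in> monomials n rho v"
        using monomials.lower[OF monomials.base] unit by auto
      then show ?thesis
        by (intro vspan.gen) force
    qed
  next
    case (lincomb x y a b)
    then have "rho (a \<cdot>\<^sub>m x + b \<cdot>\<^sub>m y) k = a \<cdot>\<^sub>m rho x k + b \<cdot>\<^sub>m rho y k"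
      using r unfolding current_rep_def by blast
    then have "rho (a \<cdot>\<^sub>m x + b \<cdot>\<^sub>m y) k *\<^sub>v v = a \<cdot>\<^sub>v (rho x k *\<^sub>v v) + b \<cdot>\<^sub>v (rho y k *\<^sub>v v)"
      using lincomb_mult_vec[OF current_rep_carrier[OF r lincomb(1)] current_rep_carrier[OF r lincomb(2)] v]
      by simp
    then show ?case
      using lincomb vspan.lincomb by metis
  qed
qed

lemma mult_vec_monomial_in_vspan_monomials:
  assumes r: "current_rep n d rho" and hw: "current_hw_vector n d rho lam v"
    and m: "(w, c) \<in> monomials n rho v" and x: "x \<in> sl n"
  shows "rho x k *\<^sub>v w \<in> vspan d (fst ` monomials n rho v)"
proof -
  have v: "v \<in> carrier_vec d"
    using hw by (simp add: current_hw_vector_def)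
  have MD: "fst ` monomials n rho v \<subseteq> carrier_vec d"
    using monomials_carrier[OF r v] by auto
  show ?thesis
    using m x
  proof (induction arbitrary: x k)
    case base
    then show ?case
      by (rule mult_vec_hw_vector_in_vspan_monomials[OF r hw])
  next
    case (lower w c i j l)
    have w: "w \<in> carrier_vec d"
      using monomials_carrier[OF r v lower(1)] .
    have E: "Emat n j i \<in> sl n"
      using lower by (intro Emat_in_sl) auto
    have R: "rho (Emat n j i) l \<in> carrier_mat d d"
      using current_rep_carrier[OF r E] .
    have "rho x k *\<^sub>v (rho (Emat n j i) l *\<^sub>v w)
        = rho (Emat n j i) l *\<^sub>v (rho x k *\<^sub>v w) + rho (x * Emat n j i - Emat n j i * x) (k + l) *\<^sub>v w"
      using commutator_mult_vec[OF current_rep_carrier[OF r lower(5)] R w]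
        current_rep_commutator[OF r lower(5) E] by simp
    moreover have "rho (Emat n j i) l *\<^sub>v (rho x k *\<^sub>v w) \<in> vspan d (fst ` monomials n rho v)"
    proof (rule mult_mat_vec_vspan[OF R MD])
      fix s assume "s \<in> fst ` monomials n rho v"
      then obtain c' where "(s, c') \<in> monomials n rho v" by auto
      then have "(rho (Emat n j i) l *\<^sub>v s, add_root i j c') \<in> monomials n rho v"
        using monomials.lower lower(2,3) by blast
      then show "rho (Emat n j i) l *\<^sub>v s \<in> vspan d (fst ` monomials n rho v)"
        by (intro vspan.gen) force
    qed (rule lower.IH[OF lower(5)])
    moreover have "rho (x * Emat n j i - Emat n j i * x) (k + l) *\<^sub>v w \<in> vspan d (fst ` monomials n rho v)"
      by (rule lower.IH[OF sl_commutator[OF lower(5) E]])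
    ultimately show ?case
      using vspan_add[OF MD] by simp
  qed
qed

lemma vspan_monomials:
  assumes r: "current_rep n d rho" and hw: "current_hw_vector n d rho lam v"
    and gen: "\<And>W. lin_subspace d W \<Longrightarrow> v \<in> W \<Longrightarrow> \<forall>x\<in>sl n. \<forall>k. \<forall>u\<in>W. rho x k *\<^sub>v u \<in> W \<Longrightarrow>
      W = carrier_vec d"
  shows "vspan d (fst ` monomials n rho v) = carrier_vec d"
proof (rule gen)
  have v: "v \<in> carrier_vec d"
    using hw by (simp add: current_hw_vector_def)
  have MD: "fst ` monomials n rho v \<subseteq> carrier_vec d"
    using monomials_carrier[OF r v] by auto
  show "lin_subspace d (vspan d (fst ` monomials n rho v))"
    by (rule lin_subspace_vspan[OF MD])
  show "v \<in> vspan d (fst ` monomials n rho v)"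
    by (rule vspan.gen) (use monomials.base in force)
  show "\<forall>x\<in>sl n. \<forall>k. \<forall>u\<in>vspan d (fst ` monomials n rho v). rho x k *\<^sub>v u \<in> vspan d (fst ` monomials n rho v)"
    using mult_mat_vec_vspan[OF current_rep_carrier[OF r] MD] mult_vec_monomial_in_vspan_monomials[OF r hw] by force
qed

lemma sum_of_nat_lessThan_complex: "(\<Sum>i<n. of_nat i :: complex) = of_nat n * (of_nat n - 1) / 2"
  by (induction n) (auto simp: field_simps)

text \<open>Every simple root takes the value 1 on \<open>height_elem n\<close>, so it measures the height of a
  combination of simple roots.\<close>
definition height_elem :: "nat \<Rightarrow> complex mat" where
  "height_elem n = mat n n (\<lambda>(i,j). if i = j then (of_nat n - 1) / 2 - of_nat i else 0)"

lemma height_elem_in_cartan: "height_elem n \<in> cartan n"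
proof -
  have "mtrace (height_elem n) = of_nat n * ((of_nat n - 1) / 2) - (\<Sum>i<n. of_nat i :: complex)"
    unfolding mtrace_def height_elem_def by (simp add: sum_subtractf)
  then show ?thesis
    unfolding cartan_def sl_def sum_of_nat_lessThan_complex by (auto simp: height_elem_def)
qed

lemma root_comb_eval_height_elem: "root_comb_eval n c (height_elem n) = of_nat (\<Sum>l<n-1. c l)"
proof -
  have "root_comb_eval n c (height_elem n) = (\<Sum>l<n-1. of_nat (c l))"
    unfolding root_comb_eval_def height_elem_def by (intro sum.cong) (auto simp: field_simps)
  then show ?thesis by simp
qed

lemma monomial_of_top_weight:
  assumes m: "(w, c) \<in> monomials n rho v" and top: "\<forall>h\<in>cartan n. root_comb_eval n c h = 0"
  shows "w = v"
proof -
  have "of_nat (\<Sum>l<n-1. c l) = (0 :: complex)"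
    using top height_elem_in_cartan[of n] root_comb_eval_height_elem[of n c] by simp
  then have "(\<Sum>l<n-1. c l) = 0"
    by (simp only: of_nat_eq_0_iff)
  then have c0: "\<forall>l<n-1. c l = 0"
    by simp
  from m have "w = v \<or> (\<exists>l<n-1. c l \<ge> 1)"
  proof induction
    case (lower w c i j k)
    then have "i < n - 1" "add_root i j c i \<ge> 1"
      by (auto simp: add_root_def)
    then show ?case by blast
  qed simp
  then show ?thesis
    using c0 by force
qed

section \<open>Homomorphisms to simple modules\<close>

lemma hom_sl_weight_vector:
  assumes r: "current_rep n d rho" and sr: "sl_rep n m sigma" and psi: "\<psi> \<in> hom_sl n d rho m sigma"
    and y: "y \<in> carrier_vec d" "weight_vector n (\<lambda>h. rho h 0) y \<nu>"
  shows "weight_vector n sigma (\<psi> *\<^sub>v y) \<nu>"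
  unfolding weight_vector_def
proof
  fix h assume h: "h \<in> cartan n"
  have pc: "\<psi> \<in> carrier_mat m d" and pe: "\<psi> * rho h 0 = sigma h * \<psi>"
    using psi cartan_in_sl[OF h] unfolding hom_sl_def by auto
  have "sigma h *\<^sub>v (\<psi> *\<^sub>v y) = (\<psi> * rho h 0) *\<^sub>v y"
    using pc y sl_rep_carrier[OF sr cartan_in_sl[OF h]] pe by simp
  also have "\<dots> = \<psi> *\<^sub>v (\<nu> h \<cdot>\<^sub>v y)"
    using assoc_mult_mat_vec[OF pc current_rep_carrier[OF r cartan_in_sl[OF h]] y(1)] y(2) h
    unfolding weight_vector_def by simp
  also have "\<dots> = \<nu> h \<cdot>\<^sub>v (\<psi> *\<^sub>v y)"
    using pc y by (simp add: mult_mat_vec)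
  finally show "sigma h *\<^sub>v (\<psi> *\<^sub>v y) = \<nu> h \<cdot>\<^sub>v (\<psi> *\<^sub>v y)" .
qed

lemma hom_sl_diff_smult:
  assumes r: "current_rep n d rho" and sr: "sl_rep n m sigma"
    and \<phi>: "\<phi> \<in> hom_sl n d rho m sigma" and \<psi>: "\<psi> \<in> hom_sl n d rho m sigma"
  shows "\<phi> - a \<cdot>\<^sub>m \<psi> \<in> hom_sl n d rho m sigma"
  unfolding hom_sl_def
proof (intro CollectI conjI ballI)
  have \<phi>c: "\<phi> \<in> carrier_mat m d" and \<psi>c: "\<psi> \<in> carrier_mat m d"
    using \<phi> \<psi> unfolding hom_sl_def by auto
  then show "\<phi> - a \<cdot>\<^sub>m \<psi> \<in> carrier_mat m d" by (simp add: minus_carrier_mat)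
  fix x assume x: "x \<in> sl n"
  have R: "rho x 0 \<in> carrier_mat d d" and S: "sigma x \<in> carrier_mat m m"
    using current_rep_carrier[OF r x] sl_rep_carrier[OF sr x] .
  have "(\<phi> - a \<cdot>\<^sub>m \<psi>) * rho x 0 = \<phi> * rho x 0 - a \<cdot>\<^sub>m (\<psi> * rho x 0)"
    using \<phi>c \<psi>c R by (simp add: minus_mult_distrib_mat[of _ m d] mult_smult_assoc_mat)
  also have "\<dots> = sigma x * \<phi> - a \<cdot>\<^sub>m (sigma x * \<psi>)"
    using \<phi> \<psi> x unfolding hom_sl_def by simp
  also have "\<dots> = sigma x * (\<phi> - a \<cdot>\<^sub>m \<psi>)"
    using \<phi>c \<psi>c S by (simp add: mult_minus_distrib_mat[of _ m m] mult_smult_distrib)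
  finally show "(\<phi> - a \<cdot>\<^sub>m \<psi>) * rho x 0 = sigma x * (\<phi> - a \<cdot>\<^sub>m \<psi>)" .
qed

lemma lin_subspace_mat_image:
  assumes A: "A \<in> carrier_mat m d"
  shows "lin_subspace m ((\<lambda>x. A *\<^sub>v x) ` carrier_vec d)"
  unfolding lin_subspace_def
proof (intro conjI ballI allI)
  show "(\<lambda>x. A *\<^sub>v x) ` carrier_vec d \<subseteq> carrier_vec m"
    using A by auto
  show "0\<^sub>v m \<in> (\<lambda>x. A *\<^sub>v x) ` carrier_vec d"
    using A by (intro image_eqI[of _ _ "0\<^sub>v d"]) auto
next
  fix u w assume "u \<in> (\<lambda>x. A *\<^sub>v x) ` carrier_vec d" "w \<in> (\<lambda>x. A *\<^sub>v x) ` carrier_vec d"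
  then obtain x1 x2 where "x1 \<in> carrier_vec d" "x2 \<in> carrier_vec d" "u = A *\<^sub>v x1" "w = A *\<^sub>v x2"
    by auto
  then show "u + w \<in> (\<lambda>x. A *\<^sub>v x) ` carrier_vec d"
    using A by (intro image_eqI[of _ _ "x1 + x2"]) (auto simp: mult_add_distrib_mat_vec[of _ m d])
next
  fix c u assume "u \<in> (\<lambda>x. A *\<^sub>v x) ` carrier_vec d"
  then obtain x where "x \<in> carrier_vec d" "u = A *\<^sub>v x"
    by auto
  then show "c \<cdot>\<^sub>v u \<in> (\<lambda>x. A *\<^sub>v x) ` carrier_vec d"
    using A by (intro image_eqI[of _ _ "c \<cdot>\<^sub>v x"]) (auto simp: mult_mat_vec)
qed

lemma mat_image_zero_iff:
  fixes A :: "complex mat"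
  assumes A: "A \<in> carrier_mat m d"
  shows "(\<lambda>x. A *\<^sub>v x) ` carrier_vec d = {0\<^sub>v m} \<longleftrightarrow> A = 0\<^sub>m m d"
proof
  assume image0: "(\<lambda>x. A *\<^sub>v x) ` carrier_vec d = {0\<^sub>v m}"
  show "A = 0\<^sub>m m d"
  proof (rule eq_matI)
    fix i j assume i: "i < dim_row (0\<^sub>m m d)" and j: "j < dim_col (0\<^sub>m m d)"
    have "A *\<^sub>v unit_vec d j = 0\<^sub>v m"
      using image0 by auto
    moreover have "(A *\<^sub>v unit_vec d j) $ i = A $$ (i,j)"
      using i j A by simp
    ultimately show "A $$ (i,j) = 0\<^sub>m m d $$ (i,j)"
      using i j by simp
  qed (use A in auto)
next
  assume "A = 0\<^sub>m m d"
  then show "(\<lambda>x. A *\<^sub>v x) ` carrier_vec d = {0\<^sub>v m}"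
    by (auto intro!: image_eqI[of _ _ "0\<^sub>v d"])
qed

lemma hom_sl_surjective:
  assumes irr: "is_simple_hw n tau m sigma" and r: "current_rep n d rho"
    and psi: "\<psi> \<in> hom_sl n d rho m sigma" "\<psi> \<noteq> 0\<^sub>m m d"
  shows "(\<lambda>x. \<psi> *\<^sub>v x) ` carrier_vec d = carrier_vec m"
proof -
  have pc: "\<psi> \<in> carrier_mat m d" and pe: "\<And>x. x \<in> sl n \<Longrightarrow> \<psi> * rho x 0 = sigma x * \<psi>"
    using psi unfolding hom_sl_def by auto
  have sr: "sl_rep n m sigma"
    using is_simple_hwD(1)[OF irr] .
  have "\<forall>x\<in>sl n. \<forall>u\<in>(\<lambda>x. \<psi> *\<^sub>v x) ` carrier_vec d. sigma x *\<^sub>v u \<in> (\<lambda>x. \<psi> *\<^sub>v x) ` carrier_vec d"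
  proof (intro ballI)
    fix x u assume x: "x \<in> sl n" and "u \<in> (\<lambda>x. \<psi> *\<^sub>v x) ` carrier_vec d"
    then obtain y where y: "y \<in> carrier_vec d" "u = \<psi> *\<^sub>v y"
      by auto
    have "sigma x *\<^sub>v u = \<psi> *\<^sub>v (rho x 0 *\<^sub>v y)"
      using y pc pe[OF x] sl_rep_carrier[OF sr x] current_rep_carrier[OF r x]
      by (metis assoc_mult_mat_vec)
    moreover have "rho x 0 *\<^sub>v y \<in> carrier_vec d"
      using current_rep_carrier[OF r x, of 0] y(1) by (rule mult_mat_vec_carrier)
    ultimately show "sigma x *\<^sub>v u \<in> (\<lambda>x. \<psi> *\<^sub>v x) ` carrier_vec d"
      by blast
  qed
  then show ?thesis
    using is_simple_hwD(2)[OF irr lin_subspace_mat_image[OF pc]] mat_image_zero_iff[OF pc] psi(2)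
    by blast
qed

lemma weight_vector_in_vspan_monomial_images:
  assumes r: "current_rep n d rho" and hw: "current_hw_vector n d rho lam v"
    and span: "vspan d (fst ` monomials n rho v) = carrier_vec d"
    and irr: "is_simple_hw n tau m sigma"
    and psi: "\<psi> \<in> hom_sl n d rho m sigma" "\<psi> \<noteq> 0\<^sub>m m d"
    and u: "u \<in> carrier_vec m" "weight_vector n sigma u \<mu>"
  shows "u \<in> vspan m {\<psi> *\<^sub>v w | w c. (w, c) \<in> monomials n rho v \<and>
      (\<forall>h\<in>cartan n. weight_eval n lam h - root_comb_eval n c h = \<mu> h)}"
proof -
  have pc: "\<psi> \<in> carrier_mat m d"
    using psi unfolding hom_sl_def by auto
  have sr: "sl_rep n m sigma"
    using is_simple_hwD(1)[OF irr] .
  have v: "v \<in> carrier_vec d"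
    using hw by (simp add: current_hw_vector_def)
  have MD: "fst ` monomials n rho v \<subseteq> carrier_vec d"
    using monomials_carrier[OF r v] by auto
  define P where "P = (\<lambda>(w, c). (\<psi> *\<^sub>v w, \<lambda>h. weight_eval n lam h - root_comb_eval n c h)) ` monomials n rho v"
  have P: "\<forall>(s,\<nu>)\<in>P. s \<in> carrier_vec m \<and> weight_vector n sigma s \<nu>"
    unfolding P_def using pc monomials_carrier[OF r v]
      hom_sl_weight_vector[OF r sr psi(1) _ monomial_weight_vector[OF r hw]] by fastforce
  obtain x where x: "x \<in> carrier_vec d" "u = \<psi> *\<^sub>v x"
    using hom_sl_surjective[OF irr r psi] u(1) by blast
  have "u \<in> vspan m (fst ` P)"
    unfolding x(2)
  proof (rule mult_mat_vec_vspan[OF pc MD])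
    show "\<psi> *\<^sub>v s \<in> vspan m (fst ` P)" if "s \<in> fst ` monomials n rho v" for s
      using that unfolding P_def by (force intro: vspan.gen)
  qed (use span x in simp)
  then have "u \<in> vspan m {s. \<exists>\<nu>. (s,\<nu>) \<in> P \<and> (\<forall>h\<in>cartan n. \<nu> h = \<mu> h)}"
    using vspan_weight_vectors_in_vspan[of n sigma m, OF sl_rep_carrier[OF sr cartan_in_sl] P _ u(2)] by blast
  moreover have "{s. \<exists>\<nu>. (s,\<nu>) \<in> P \<and> (\<forall>h\<in>cartan n. \<nu> h = \<mu> h)} = {\<psi> *\<^sub>v w | w c. (w, c) \<in> monomials n rho v \<and>
      (\<forall>h\<in>cartan n. weight_eval n lam h - root_comb_eval n c h = \<mu> h)}"
    unfolding P_def by fastforce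
  ultimately show ?thesis by simp
qed

section \<open>Multiplicities in \<open>F\<close>\<close>

lemma mat_dim_eq_0:
  assumes "S \<subseteq> {0\<^sub>m r c}"
  shows "mat_dim r c S = 0"
  unfolding mat_dim_def
  by (rule Least_eq_0) (use assms in \<open>auto simp: mat_lincomb_def intro!: exI[of _ "[]"]\<close>)

lemma mat_dim_eq_1:
  assumes \<phi>: "\<phi> \<in> S" "\<phi> \<in> carrier_mat r c" "\<phi> \<noteq> 0\<^sub>m r c" and S: "S \<subseteq> range (\<lambda>a. a \<cdot>\<^sub>m \<phi>)"
  shows "mat_dim r c S = 1"
proof -
  define P where "P k \<longleftrightarrow> (\<exists>B. length B = k \<and> set B \<subseteq> S \<and>
      (\<forall>s\<in>S. \<exists>cs. length cs = length B \<and> s = mat_lincomb r c cs B))" for k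
  have P1: "P 1"
    unfolding P_def
  proof (intro exI[of _ "[\<phi>]"] conjI ballI)
    fix s assume "s \<in> S"
    then obtain a where "s = a \<cdot>\<^sub>m \<phi>"
      using S by blast
    moreover have "mat_lincomb r c [a] [\<phi>] = a \<cdot>\<^sub>m \<phi>"
      unfolding mat_lincomb_def using \<phi>(2) by (intro eq_matI) auto
    ultimately show "\<exists>cs. length cs = length [\<phi>] \<and> s = mat_lincomb r c cs [\<phi>]"
      by (intro exI[of _ "[a]"]) auto
  qed (use \<phi>(1) in auto)
  have nP0: "\<not> P 0"
    using \<phi>(1,3) unfolding P_def by (auto simp: mat_lincomb_def)
  have "(LEAST k. P k) = 1"
  proof (rule Least_equality[of P, OF P1])
    fix k assume "P k"
    then show "1 \<le> k"
      using nP0 by (cases k) auto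
  qed
  then show ?thesis
    unfolding mat_dim_def P_def .
qed

lemma is_FD:
  assumes F: "is_F n lam1 lam2 d rho v"
  shows "current_rep n d rho"
    and "current_hw_vector n d rho (\<lambda>i. lam1 i + lam2 i) v"
    and "vspan d (fst ` monomials n rho v) = carrier_vec d"
    and "\<And>d' rho' w. current_rep n d' rho' \<Longrightarrow> F_rels n lam1 lam2 d' rho' w \<Longrightarrow>
      \<exists>\<phi>\<in>carrier_mat d' d. (\<forall>x\<in>sl n. \<forall>k. \<phi> * rho x k = rho' x k * \<phi>) \<and> \<phi> *\<^sub>v v = w"
proof -
  show r: "current_rep n d rho"
    using F unfolding is_F_def by (rule conjunct1)
  show hw: "current_hw_vector n d rho (\<lambda>i. lam1 i + lam2 i) v"
    using F unfolding is_F_def by (intro F_rels_current_hw_vector) (elim conjE)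
  show "vspan d (fst ` monomials n rho v) = carrier_vec d"
  proof (rule vspan_monomials[OF r hw])
    fix W assume "lin_subspace d W" "v \<in> W" "\<forall>x\<in>sl n. \<forall>k. \<forall>u\<in>W. rho x k *\<^sub>v u \<in> W"
    then show "W = carrier_vec d"
      using F unfolding is_F_def by (elim conjE allE[of _ W]) blast
  qed
  show "\<exists>\<phi>\<in>carrier_mat d' d. (\<forall>x\<in>sl n. \<forall>k. \<phi> * rho x k = rho' x k * \<phi>) \<and> \<phi> *\<^sub>v v = w"
    if "current_rep n d' rho'" "F_rels n lam1 lam2 d' rho' w" for d' rho' w
    using F that unfolding is_F_def by (elim conjE allE[of _ d'] allE[of _ rho'] allE[of _ w]) blast
qed

lemma weight_le_if_root_comb:
  assumes "\<forall>h\<in>cartan n. weight_eval n lam h - root_comb_eval n c h = weight_eval n tau h"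
  shows "weight_le n tau lam"
  unfolding weight_le_def
proof (intro exI[of _ c] ballI)
  fix h assume "h \<in> cartan n"
  then have "weight_eval n lam h - root_comb_eval n c h = weight_eval n tau h"
    using assms by blast
  then show "weight_eval n lam h - weight_eval n tau h
      = (\<Sum>i<n - 1. of_nat (c i) * (h $$ (i, i) - h $$ (i + 1, i + 1)))"
    unfolding root_comb_eval_def by (simp add: algebra_simps)
qed

lemma hom_F_eq_0_if_not_le:
  assumes F: "is_F n lam1 lam2 d rho v"
    and nle: "\<not> weight_le n tau (\<lambda>i. lam1 i + lam2 i)" and irr: "is_simple_hw n tau m sigma"
  shows "hom_sl n d rho m sigma \<subseteq> {0\<^sub>m m d}"
proof
  fix \<psi> assume \<psi>: "\<psi> \<in> hom_sl n d rho m sigma"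
  obtain u where u: "sl_hw_vector n m sigma tau u"
    using is_simple_hwD(3)[OF irr] by blast
  have uc: "u \<in> carrier_vec m" and u0: "u \<noteq> 0\<^sub>v m"
    and uw: "weight_vector n sigma u (weight_eval n tau)"
    using u by (auto simp: sl_hw_vector_def weight_vector_def)
  show "\<psi> \<in> {0\<^sub>m m d}"
  proof (rule ccontr)
    assume "\<psi> \<notin> {0\<^sub>m m d}"
    then have u_span: "u \<in> vspan m {\<psi> *\<^sub>v w | w c. (w, c) \<in> monomials n rho v \<and>
        (\<forall>h\<in>cartan n. weight_eval n (\<lambda>i. lam1 i + lam2 i) h - root_comb_eval n c h = weight_eval n tau h)}"
      using weight_vector_in_vspan_monomial_images[OF is_FD(1-3)[OF F] irr \<psi> _ uc uw] by blast
    have no_monomials: "{\<psi> *\<^sub>v w | w c. (w, c) \<in> monomials n rho v \<and>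
        (\<forall>h\<in>cartan n. weight_eval n (\<lambda>i. lam1 i + lam2 i) h - root_comb_eval n c h = weight_eval n tau h)} = {}"
      using nle weight_le_if_root_comb by blast
    have "u \<in> vspan m {}"
      using u_span unfolding no_monomials .
    then obtain a where "u = a \<cdot>\<^sub>v 0\<^sub>v m"
      using vspan_subset_multiples[of "0\<^sub>v m" m "{}"] by auto
    moreover have "a \<cdot>\<^sub>v 0\<^sub>v m = 0\<^sub>v m"
      by (intro eq_vecI) auto
    ultimately show False
      using u0 by simp
  qed
qed

lemma sl_hw_vector_multiple_of_image_top:
  assumes F: "is_F n lam1 lam2 d rho v" and irr: "is_simple_hw n (\<lambda>i. lam1 i + lam2 i) m sigma"
    and u: "sl_hw_vector n m sigma (\<lambda>i. lam1 i + lam2 i) u"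
    and \<psi>: "\<psi> \<in> hom_sl n d rho m sigma" "\<psi> \<noteq> 0\<^sub>m m d"
  shows "\<exists>a. u = a \<cdot>\<^sub>v (\<psi> *\<^sub>v v)"
proof -
  have v: "v \<in> carrier_vec d"
    using is_FD(2)[OF F] by (simp add: current_hw_vector_def)
  have uc: "u \<in> carrier_vec m"
    using u by (simp add: sl_hw_vector_def)
  have pv: "\<psi> *\<^sub>v v \<in> carrier_vec m"
    using \<psi> v unfolding hom_sl_def by auto
  have "weight_vector n sigma u (weight_eval n (\<lambda>i. lam1 i + lam2 i))"
    using u by (simp add: sl_hw_vector_def weight_vector_def)
  then have "u \<in> vspan m {\<psi> *\<^sub>v w | w c. (w, c) \<in> monomials n rho v \<and>
      (\<forall>h\<in>cartan n. weight_eval n (\<lambda>i. lam1 i + lam2 i) h - root_comb_eval n c h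
        = weight_eval n (\<lambda>i. lam1 i + lam2 i) h)}"
    by (rule weight_vector_in_vspan_monomial_images[OF is_FD(1-3)[OF F] irr \<psi> uc])
  then have "u \<in> vspan m {\<psi> *\<^sub>v w | w c. (w, c) \<in> monomials n rho v \<and>
      (\<forall>h\<in>cartan n. root_comb_eval n c h = 0)}"
    by simp
  moreover have "{\<psi> *\<^sub>v w | w c. (w, c) \<in> monomials n rho v \<and> (\<forall>h\<in>cartan n. root_comb_eval n c h = 0)}
      \<subseteq> range (\<lambda>a. a \<cdot>\<^sub>v (\<psi> *\<^sub>v v))"
  proof
    fix s assume "s \<in> {\<psi> *\<^sub>v w | w c. (w, c) \<in> monomials n rho v \<and> (\<forall>h\<in>cartan n. root_comb_eval n c h = 0)}"
    then have "s = \<psi> *\<^sub>v v"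
      using monomial_of_top_weight by blast
    then show "s \<in> range (\<lambda>a. a \<cdot>\<^sub>v (\<psi> *\<^sub>v v))"
      using pv by (intro range_eqI[where x=1]) auto
  qed
  ultimately show ?thesis
    using vspan_subset_multiples[OF pv] by blast
qed

text \<open>The universal property gives \<open>\<phi>\<close> with \<open>\<phi> v = u\<close>. For \<open>\<psi> \<noteq> 0\<close> write \<open>u = a \<psi> v\<close>; then
  \<open>\<phi> - a \<psi>\<close> kills \<open>v\<close>, and a nonzero homomorphism cannot kill \<open>v\<close>, so \<open>\<phi> = a \<psi>\<close>.\<close>
lemma hom_F_top_weight_line:
  assumes F: "is_F n lam1 lam2 d rho v" and irr: "is_simple_hw n (\<lambda>i. lam1 i + lam2 i) m sigma"
  shows "\<exists>\<phi>\<in>hom_sl n d rho m sigma. \<phi> \<noteq> 0\<^sub>m m d \<and> hom_sl n d rho m sigma \<subseteq> range (\<lambda>a. a \<cdot>\<^sub>m \<phi>)"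
proof -
  note r = is_FD(1)[OF F]
  have sr: "sl_rep n m sigma"
    using is_simple_hwD(1)[OF irr] .
  have v: "v \<in> carrier_vec d"
    using is_FD(2)[OF F] by (simp add: current_hw_vector_def)
  obtain u where u: "sl_hw_vector n m sigma (\<lambda>i. lam1 i + lam2 i) u"
    using is_simple_hwD(3)[OF irr] by blast
  have u0: "u \<noteq> 0\<^sub>v m"
    using u by (auto simp: sl_hw_vector_def)
  obtain \<phi> where \<phi>c: "\<phi> \<in> carrier_mat m d" and \<phi>: "\<forall>x\<in>sl n. \<forall>k. \<phi> * rho x k = eval_rep sigma m x k * \<phi>"
    and \<phi>v: "\<phi> *\<^sub>v v = u"
    using is_FD(4)[OF F current_rep_eval_rep[OF sr] F_rels_eval_rep[OF sr u]] by blast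
  have \<phi>_hom: "\<phi> \<in> hom_sl n d rho m sigma"
    unfolding hom_sl_def using \<phi>c \<phi> by (auto simp: eval_rep_def)
  have top: "\<exists>a. u = a \<cdot>\<^sub>v (\<psi> *\<^sub>v v)" if "\<psi> \<in> hom_sl n d rho m sigma" "\<psi> \<noteq> 0\<^sub>m m d" for \<psi>
    using sl_hw_vector_multiple_of_image_top[OF F irr u that] .
  have "\<psi> \<in> range (\<lambda>a. a \<cdot>\<^sub>m \<phi>)" if \<psi>: "\<psi> \<in> hom_sl n d rho m sigma" for \<psi>
  proof (cases "\<psi> = 0\<^sub>m m d")
    case True
    then have "\<psi> = 0 \<cdot>\<^sub>m \<phi>"
      using \<phi>c by (intro eq_matI) auto
    then show ?thesis by blast
  next
    case False
    have \<psi>c: "\<psi> \<in> carrier_mat m d"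
      using \<psi> unfolding hom_sl_def by auto
    obtain a where a: "u = a \<cdot>\<^sub>v (\<psi> *\<^sub>v v)"
      using top[OF \<psi> False] by blast
    have "(\<phi> - a \<cdot>\<^sub>m \<psi>) *\<^sub>v v = 0\<^sub>v m"
      using \<phi>c \<psi>c v \<phi>v a by (simp add: minus_mult_distrib_mat_vec smult_mat_mult_vec)
    then have \<chi>0: "\<phi> - a \<cdot>\<^sub>m \<psi> = 0\<^sub>m m d"
      using top[OF hom_sl_diff_smult[OF r sr \<phi>_hom \<psi>]] u0 by force
    have a0: "a \<noteq> 0"
      using a u0 \<psi>c v by auto
    have "\<psi> = (1 / a) \<cdot>\<^sub>m \<phi>"
    proof (rule eq_matI)
      fix i j assume ij: "i < dim_row ((1 / a) \<cdot>\<^sub>m \<phi>)" "j < dim_col ((1 / a) \<cdot>\<^sub>m \<phi>)"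
      then have "(\<phi> - a \<cdot>\<^sub>m \<psi>) $$ (i,j) = 0"
        using \<chi>0 \<phi>c by auto
      then show "\<psi> $$ (i,j) = ((1 / a) \<cdot>\<^sub>m \<phi>) $$ (i,j)"
        using ij \<phi>c \<psi>c a0 by (simp add: field_simps)
    qed (use \<phi>c \<psi>c in auto)
    then show ?thesis by blast
  qed
  moreover have "\<phi> \<noteq> 0\<^sub>m m d"
    using \<phi>v u0 v by auto
  ultimately show ?thesis
    using \<phi>_hom by blast
qed

theorem corollary3p3:
  fixes n d :: nat and rho :: "complex mat \<Rightarrow> nat \<Rightarrow> complex mat" and v :: "complex vec"
    and lam1 lam2 :: "nat \<Rightarrow> nat"
  assumes "n \<ge> 2"
    and "is_F n lam1 lam2 d rho v"
  shows "(\<forall>m sigma. is_simple_hw n (\<lambda>i. lam1 i + lam2 i) m sigma \<longrightarrow>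
            mat_dim m d (hom_sl n d rho m sigma) = 1)
       \<and> (\<forall>tau m sigma. \<not> weight_le n tau (\<lambda>i. lam1 i + lam2 i) \<longrightarrow> is_simple_hw n tau m sigma \<longrightarrow>
            mat_dim m d (hom_sl n d rho m sigma) = 0)"
proof (intro conjI allI impI)
  fix m sigma assume irr: "is_simple_hw n (\<lambda>i. lam1 i + lam2 i) m sigma"
  then obtain \<phi> where "\<phi> \<in> hom_sl n d rho m sigma" "\<phi> \<noteq> 0\<^sub>m m d"
    "hom_sl n d rho m sigma \<subseteq> range (\<lambda>a. a \<cdot>\<^sub>m \<phi>)"
    using hom_F_top_weight_line[OF assms(2)] by blast
  then show "mat_dim m d (hom_sl n d rho m sigma) = 1"
    by (intro mat_dim_eq_1) (auto simp: hom_sl_def)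
next
  fix tau m sigma
  assume "\<not> weight_le n tau (\<lambda>i. lam1 i + lam2 i)" and "is_simple_hw n tau m sigma"
  then show "mat_dim m d (hom_sl n d rho m sigma) = 0"
    using mat_dim_eq_0 hom_F_eq_0_if_not_le[OF assms(2)] by blast
qed

end
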